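(* Let $u,\phi_1,\dots,\phi_N$ be a solution of the $n$-th KdV equation with self-consistent sources of degree $N$ (with distinct constants $\lambda_1,\dots,\lambda_N$ and constant $\alpha$). Fix a constant $\eta$, and let $f_1$ satisfy the Lax pair $$f_{1,xx}+(\xi_1+u)f_1=0,\qquad f_{1,t}=Q^{(n,N)}f_1$$ with spectral parameter $\lambda=\xi_1$. For any $\psi$ satisfying the Lax pair $\psi_{xx}+(\lambda+u)\psi=0$, $\psi_t=Q^{(n,N)}\psi$ with spectral parameter $\lambda$ (and the same $\eta$), define the Darboux transformation $$\bar\psi=\psi_x-\frac{f_{1,x}}{f_1}\psi,\qquad \bar u=u+2\partial^2\ln f_1,\qquad \bar\phi_j=\frac{1}{\sqrt{\lambda_j-\xi_1}}\Big[\phi_{j,x}-\frac{f_{1,x}}{f_1}\phi_j\Big],\quad j=1,\dots,N.$$ Then $$\bar\psi_{xx}+(\lambda+\bar u)\bar\psi=0,\qquad \bar\psi_t=A^{(n)}(\bar u,\lambda)\bar\psi+\eta\bar\psi+\alpha\sum_{j=1}^N\bar\phi_j\,\partial^{-1}(\bar\phi_j\bar\psi),$$ and $\bar u,\bar\phi_1,\dots,\bar\phi_N$ satisfy the $n$-th KdV equation with self-consistent sources of degree $N$: $$\bar u_t=\partial\Big[-2b_{n+2}[\bar u]-2\alpha\sum_{j=1}^N\bar\phi_j^2\Big],\qquad \bar\phi_{j,xx}+(\lambda_j+\bar u)\bar\phi_j=0,\ j=1,\dots,N.$$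
   Context: Let $\partial=\partial/\partial x$ and $\partial^{-1}=\int_{-\infty}^x\cdot\,dx$, so $\partial\partial^{-1}=\partial^{-1}\partial=1$; all functions of $(x,t)$ are smooth and decay as $x\to-\infty$ sufficiently fast that all integrals $\partial^{-1}(\cdot)$ appearing converge (in particular products of eigenfunctions such as $\phi_j\psi$ decay at $x=-\infty$). For a potential $u(x,t)$ let $L=-\frac14\partial^2-u+\frac12\partial^{-1}u_x$, and define $b_0=0$, $b_1=1$, $b_{k+1}=Lb_k$ for $k\ge1$ (so $b_{k+1}=-\frac12L^{k-1}u$), $a_k=-\frac12 b_{k,x}$ for $k\ge0$; write $b_k[u]$ to indicate dependence on $u$. Fix an integer $n\ge0$ and write $t=t_n$. Define the differential operator $A^{(n)}(u,\lambda)=\sum_{i=0}^{n+1}(a_i+b_i\partial)\lambda^{n+1-i}$. The $n$-th KdV equation with self-consistent sources of degree $N$ (constant $\alpha$, distinct constants $\lambda_j$) is the system $u_t=\partial\big[-2b_{n+2}[u]-2\alpha\sum_{j=1}^N\phi_j^2\big]$, $\phi_{j,xx}+(\lambda_j+u)\phi_j=0$, $j=1,\dots,N$. For a constant $\eta$ and spectral parameter $\lambda$, $Q^{(n,N)}$ denotes the operator $Q^{(n,N)}\psi=A^{(n)}(u,\lambda)\psi+\eta\psi+\alpha\sum_{j=1}^N\phi_j\,\partial^{-1}(\phi_j\psi)$. *)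

theory Defs
  imports "HOL-Analysis.Analysis"
begin

text \<open>Functions of (x,t), complex-valued (complex values are needed because of
  the factor 1/sqrt(lambda_j - xi_1)).\<close>
type_synonym fn = "real \<Rightarrow> real \<Rightarrow> complex"

definition px :: "fn \<Rightarrow> fn" where
  "px f = (\<lambda>x t. vector_derivative (\<lambda>y. f y t) (at x))"

definition pt :: "fn \<Rightarrow> fn" where
  "pt f = (\<lambda>x t. vector_derivative (\<lambda>s. f x s) (at t))"

definition pinv :: "fn \<Rightarrow> fn" where
  "pinv g = (\<lambda>x t. integral {..x} (\<lambda>y. g y t))"

fun pd :: "bool list \<Rightarrow> fn \<Rightarrow> fn" where
  "pd [] f = f"
| "pd (True # ds) f = px (pd ds f)"
| "pd (False # ds) f = pt (pd ds f)"

definition smooth :: "fn \<Rightarrow> bool" where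
  "smooth f \<longleftrightarrow> (\<forall>ds x t. (\<lambda>p. pd ds f (fst p) (snd p)) differentiable (at (x, t)))"

definition decaying :: "fn \<Rightarrow> bool" where
  "decaying f \<longleftrightarrow> smooth f
     \<and> (\<forall>ds t. ((\<lambda>x. pd ds f x t) \<longlongrightarrow> 0) at_bot)
     \<and> (\<forall>ds x t. (\<lambda>y. pd ds f y t) absolutely_integrable_on {..x})"

definition Lop :: "fn \<Rightarrow> fn \<Rightarrow> fn" where
  "Lop u b = (\<lambda>x t. - (1/4) * px (px b) x t - u x t * b x t
                    + (1/2) * pinv (\<lambda>y s. px u y s * b y s) x t)"

fun bseq :: "fn \<Rightarrow> nat \<Rightarrow> fn" where
  "bseq u 0 = (\<lambda>x t. 0)"
| "bseq u (Suc 0) = (\<lambda>x t. 1)"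
| "bseq u (Suc (Suc k)) = Lop u (bseq u (Suc k))"

definition aseq :: "fn \<Rightarrow> nat \<Rightarrow> fn" where
  "aseq u k = (\<lambda>x t. - (1/2) * px (bseq u k) x t)"

definition Aop :: "nat \<Rightarrow> fn \<Rightarrow> complex \<Rightarrow> fn \<Rightarrow> fn" where
  "Aop n u lam psi = (\<lambda>x t. \<Sum>i\<in>{0..n+1}.
      (aseq u i x t * psi x t + bseq u i x t * px psi x t) * lam ^ (n + 1 - i))"

definition Qop :: "nat \<Rightarrow> nat \<Rightarrow> complex \<Rightarrow> complex \<Rightarrow> fn \<Rightarrow> (nat \<Rightarrow> fn)
                    \<Rightarrow> complex \<Rightarrow> fn \<Rightarrow> fn" where
  "Qop n N alpha eta u phi lam psi = (\<lambda>x t. Aop n u lam psi x t + eta * psi x t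
      + alpha * (\<Sum>j\<in>{1..N}. phi j x t * pinv (\<lambda>y s. phi j y s * psi y s) x t))"

definition kdv_scs :: "nat \<Rightarrow> nat \<Rightarrow> complex \<Rightarrow> (nat \<Rightarrow> complex) \<Rightarrow> fn \<Rightarrow> (nat \<Rightarrow> fn) \<Rightarrow> bool" where
  "kdv_scs n N alpha lams u phi \<longleftrightarrow>
     (\<forall>x t. pt u x t = px (\<lambda>y s. - 2 * bseq u (n + 2) y s
                               - 2 * alpha * (\<Sum>j\<in>{1..N}. (phi j y s)\<^sup>2)) x t)
   \<and> (\<forall>j\<in>{1..N}. \<forall>x t. px (px (phi j)) x t + (lams j + u x t) * phi j x t = 0)"

definition lax_pair :: "nat \<Rightarrow> nat \<Rightarrow> complex \<Rightarrow> complex \<Rightarrow> fn \<Rightarrow> (nat \<Rightarrow> fn)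
                         \<Rightarrow> complex \<Rightarrow> fn \<Rightarrow> bool" where
  "lax_pair n N alpha eta u phi lam psi \<longleftrightarrow>
     (\<forall>x t. px (px psi) x t + (lam + u x t) * psi x t = 0)
   \<and> (\<forall>x t. pt psi x t = Qop n N alpha eta u phi lam psi x t)"

definition dt_psi :: "fn \<Rightarrow> fn \<Rightarrow> fn" where
  "dt_psi f1 psi = (\<lambda>x t. px psi x t - (px f1 x t / f1 x t) * psi x t)"

text \<open>u + 2 d^2 ln f1, with d ln f1 written as the logarithmic derivative f1_x / f1.\<close>
definition dt_u :: "fn \<Rightarrow> fn \<Rightarrow> fn" where
  "dt_u u f1 = (\<lambda>x t. u x t + 2 * px (\<lambda>y s. px f1 y s / f1 y s) x t)"

definition dt_phi :: "(nat \<Rightarrow> complex) \<Rightarrow> complex \<Rightarrow> fn \<Rightarrow> (nat \<Rightarrow> fn) \<Rightarrow> (nat \<Rightarrow> fn)" where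
  "dt_phi lams xi f1 phi = (\<lambda>j x t. (1 / csqrt (lams j - xi)) *
      (px (phi j) x t - (px f1 x t / f1 x t) * phi j x t))"

end

theory Submission
  imports Defs
begin

text \<open>At a fixed time everything reduces to identities between functions of \<open>x\<close>. With
  \<open>s = f\<^sub>1\<^sub>,\<^sub>x / f\<^sub>1\<close>, the spectral equation of \<open>f\<^sub>1\<close> and the definition of \<open>\<bar>u\<close> form the
  Riccati pair \<open>u = -\<xi> - s\<^sup>2 - s\<^sub>x\<close>, \<open>\<bar>u = -\<xi> - s\<^sup>2 + s\<^sub>x\<close>, so \<open>\<psi> \<mapsto> \<psi>\<^sub>x - s\<psi>\<close> maps
  solutions of \<open>\<psi>\<^sub>x\<^sub>x + (\<lambda> + u)\<psi> = 0\<close> to solutions of the same equation for \<open>\<bar>u\<close>.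
  Differentiating \<open>b\<^sub>k\<^sub>+\<^sub>1 = L b\<^sub>k\<close> gives the local recursion \<open>\<partial>b\<^sub>k\<^sub>+\<^sub>1 = - M\<^sub>u b\<^sub>k\<close>, which the
  Riccati pair intertwines with the one for \<open>\<bar>u\<close>; as everything vanishes at \<open>-\<infinity>\<close>, this
  yields \<open>b\<^sub>k[\<bar>u] = b\<^sub>k[u] + D\<^sub>s E\<^sub>k\<close> with \<open>E\<^sub>k = (\<Sum>i<k. \<xi>\<^sup>k\<^sup>-\<^sup>1\<^sup>-\<^sup>i b\<^sub>i[u])\<close>.
  The primitives \<open>\<partial>\<^sup>-\<^sup>1(\<phi>\<^sub>j f\<^sub>1)\<close> and \<open>\<partial>\<^sup>-\<^sup>1(\<bar>\<phi>\<^sub>j \<bar>\<psi>)\<close> are explicit, and with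
  \<open>\<rho> = f\<^sub>1\<^sub>,\<^sub>t / f\<^sub>1\<close> one gets \<open>\<bar>\<psi>\<^sub>t = \<partial>(Q\<psi>) - \<rho>\<^sub>x \<psi> - s Q\<psi> = \<bar>Q \<bar>\<psi>\<close> and
  \<open>\<bar>u\<^sub>t = u\<^sub>t + 2\<rho>\<^sub>x\<^sub>x\<close>, which is the flux identity for \<open>\<bar>u\<close>. Passing between \<open>x\<close>- and
  \<open>t\<close>-derivatives uses the symmetry of mixed partials.\<close>

section \<open>Derivatives of functions on the real line\<close>

definition dx :: "(real \<Rightarrow> complex) \<Rightarrow> real \<Rightarrow> complex" where
  "dx h = (\<lambda>x. vector_derivative h (at x))"

definition diffable :: "(real \<Rightarrow> complex) \<Rightarrow> bool" where
  "diffable h \<longleftrightarrow> (\<forall>x. h differentiable (at x))"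

lemma diffable_has_vector_derivative: "diffable h \<Longrightarrow> (h has_vector_derivative dx h x) (at x)"
  unfolding diffable_def dx_def using vector_derivative_works by blast

lemma has_vector_derivative_imp_dx:
  assumes "\<And>x. (h has_vector_derivative h' x) (at x)"
  shows "diffable h \<and> dx h = h'"
proof
  show "diffable h"
    using assms unfolding diffable_def differentiable_def has_vector_derivative_def by blast
  show "dx h = h'"
    unfolding dx_def using assms by (intro ext) (simp add: vector_derivative_at)
qed

lemma diffable_const [simp]: "diffable (\<lambda>x. c)" and dx_const [simp]: "dx (\<lambda>x. c) = (\<lambda>x. 0)"
  using has_vector_derivative_imp_dx[of "\<lambda>x. c" "\<lambda>x. 0"] by (auto intro: derivative_eq_intros)

lemma dx_add: "diffable g \<Longrightarrow> diffable h \<Longrightarrow> dx (\<lambda>x. g x + h x) = (\<lambda>x. dx g x + dx h x)"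
  and diffable_add: "diffable g \<Longrightarrow> diffable h \<Longrightarrow> diffable (\<lambda>x. g x + h x)"
  using has_vector_derivative_imp_dx[of "\<lambda>x. g x + h x" "\<lambda>x. dx g x + dx h x"]
  by (auto intro!: has_vector_derivative_add diffable_has_vector_derivative)

lemma dx_diff: "diffable g \<Longrightarrow> diffable h \<Longrightarrow> dx (\<lambda>x. g x - h x) = (\<lambda>x. dx g x - dx h x)"
  and diffable_diff: "diffable g \<Longrightarrow> diffable h \<Longrightarrow> diffable (\<lambda>x. g x - h x)"
  using has_vector_derivative_imp_dx[of "\<lambda>x. g x - h x" "\<lambda>x. dx g x - dx h x"]
  by (auto intro!: has_vector_derivative_diff diffable_has_vector_derivative)

lemma dx_minus: "diffable h \<Longrightarrow> dx (\<lambda>x. - h x) = (\<lambda>x. - dx h x)"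
  and diffable_minus: "diffable h \<Longrightarrow> diffable (\<lambda>x. - h x)"
  using has_vector_derivative_imp_dx[of "\<lambda>x. - h x" "\<lambda>x. - dx h x"]
  by (auto intro!: has_vector_derivative_minus diffable_has_vector_derivative)

lemma dx_mult: "diffable g \<Longrightarrow> diffable h \<Longrightarrow> dx (\<lambda>x. g x * h x) = (\<lambda>x. g x * dx h x + dx g x * h x)"
  and diffable_mult: "diffable g \<Longrightarrow> diffable h \<Longrightarrow> diffable (\<lambda>x. g x * h x)"
  using has_vector_derivative_imp_dx[of "\<lambda>x. g x * h x" "\<lambda>x. g x * dx h x + dx g x * h x"]
  by (auto intro!: has_vector_derivative_mult diffable_has_vector_derivative)

lemma dx_cmult: "diffable h \<Longrightarrow> dx (\<lambda>x. c * h x) = (\<lambda>x. c * dx h x)"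
  and diffable_cmult: "diffable h \<Longrightarrow> diffable (\<lambda>x. c * h x)"
  using dx_mult[of "\<lambda>x. c" h] diffable_mult[of "\<lambda>x. c" h] by auto

lemma dx_sum: "finite A \<Longrightarrow> (\<And>i. i \<in> A \<Longrightarrow> diffable (h i)) \<Longrightarrow>
     dx (\<lambda>x. \<Sum>i\<in>A. h i x) = (\<lambda>x. \<Sum>i\<in>A. dx (h i) x)"
  and diffable_sum: "finite A \<Longrightarrow> (\<And>i. i \<in> A \<Longrightarrow> diffable (h i)) \<Longrightarrow> diffable (\<lambda>x. \<Sum>i\<in>A. h i x)"
  using has_vector_derivative_imp_dx[of "\<lambda>x. \<Sum>i\<in>A. h i x" "\<lambda>x. \<Sum>i\<in>A. dx (h i) x"]
  by (auto intro!: has_vector_derivative_sum diffable_has_vector_derivative)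

lemma has_vector_derivative_divide:
  fixes g h :: "real \<Rightarrow> complex"
  assumes g: "(g has_vector_derivative g') (at x)" and h: "(h has_vector_derivative h') (at x)"
    and nz: "h x \<noteq> 0"
  shows "((\<lambda>y. g y / h y) has_vector_derivative ((g' * h x - g x * h') / (h x)\<^sup>2)) (at x)"
proof -
  have "(inverse has_field_derivative - (inverse (h x) ^ Suc (Suc 0))) (at (h x))"
    using DERIV_inverse[OF nz] by simp
  from field_vector_diff_chain_at[OF h this]
  have "((\<lambda>y. inverse (h y)) has_vector_derivative - h' * (inverse (h x))\<^sup>2) (at x)"
    by (simp add: o_def power2_eq_square)
  from has_vector_derivative_mult[OF g this]
  have "((\<lambda>y. g y * inverse (h y)) has_vector_derivative
          g x * (- h' * (inverse (h x))\<^sup>2) + g' * inverse (h x)) (at x)" .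
  moreover have "g x * (- h' * (inverse (h x))\<^sup>2) + g' * inverse (h x) = (g' * h x - g x * h') / (h x)\<^sup>2"
    using nz by (simp add: field_simps power2_eq_square)
  ultimately show ?thesis by (simp add: divide_inverse)
qed

lemma dx_divide: "diffable g \<Longrightarrow> diffable h \<Longrightarrow> (\<And>x. h x \<noteq> 0) \<Longrightarrow>
    dx (\<lambda>x. g x / h x) = (\<lambda>x. (dx g x * h x - g x * dx h x) / (h x)\<^sup>2)"
  and diffable_divide: "diffable g \<Longrightarrow> diffable h \<Longrightarrow> (\<And>x. h x \<noteq> 0) \<Longrightarrow>
    diffable (\<lambda>x. g x / h x)"
  using has_vector_derivative_imp_dx[of "\<lambda>x. g x / h x"
      "\<lambda>x. (dx g x * h x - g x * dx h x) / (h x)\<^sup>2"]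
  by (auto intro!: has_vector_derivative_divide diffable_has_vector_derivative)

lemma diffable_continuous_on: "diffable h \<Longrightarrow> continuous_on UNIV h"
  unfolding diffable_def
  by (meson differentiable_imp_continuous_on differentiable_on_def differentiable_at_withinI)

definition smooth1 :: "(real \<Rightarrow> complex) \<Rightarrow> bool" where
  "smooth1 h \<longleftrightarrow> (\<forall>m. diffable ((dx^^m) h))"

lemma funpow_dx_Suc: "(dx^^Suc m) h = (dx^^m) (dx h)"
  by (metis funpow_Suc_right o_apply)

lemma smooth1_iff_dx: "smooth1 h \<longleftrightarrow> diffable h \<and> smooth1 (dx h)"
proof -
  have "(\<forall>m. diffable ((dx^^m) h)) \<longleftrightarrow> diffable ((dx^^0) h) \<and> (\<forall>m. diffable ((dx^^Suc m) h))"
    by (metis not0_implies_Suc)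
  then show ?thesis
    unfolding smooth1_def funpow_dx_Suc by simp
qed

lemma smooth1_diffable: "smooth1 h \<Longrightarrow> diffable h"
  and smooth1_dx: "smooth1 h \<Longrightarrow> smooth1 (dx h)"
  using smooth1_iff_dx by blast+

lemma funpow_dx_add:
  "(\<forall>k<m. diffable ((dx^^k) p)) \<Longrightarrow> (\<forall>k<m. diffable ((dx^^k) q)) \<Longrightarrow>
   (dx^^m) (\<lambda>x. p x + q x) = (\<lambda>x. (dx^^m) p x + (dx^^m) q x)"
proof (induction m arbitrary: p q)
  case 0 then show ?case by simp
next
  case (Suc m)
  have "diffable p" "diffable q" using Suc.prems by (metis funpow_0 zero_less_Suc)+
  then have "(dx^^Suc m) (\<lambda>x. p x + q x) = (dx^^m) (\<lambda>x. dx p x + dx q x)"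
    by (simp del: funpow.simps add: funpow_dx_Suc dx_add)
  also have "\<dots> = (\<lambda>x. (dx^^m) (dx p) x + (dx^^m) (dx q) x)"
    using Suc.prems by (intro Suc.IH) (auto simp: funpow_dx_Suc[symmetric])
  finally show ?case by (simp del: funpow.simps add: funpow_dx_Suc)
qed

lemma funpow_dx_add_smooth1:
  "smooth1 g \<Longrightarrow> smooth1 h \<Longrightarrow> (dx^^m) (\<lambda>x. g x + h x) = (\<lambda>x. (dx^^m) g x + (dx^^m) h x)"
  unfolding smooth1_def by (rule funpow_dx_add) auto

lemma funpow_dx_const: "(dx^^m) (\<lambda>x. c) = (\<lambda>x. if m = 0 then c else 0)"
  by (induction m) auto

lemma smooth1_const [simp]: "smooth1 (\<lambda>x. c)"
  unfolding smooth1_def funpow_dx_const by simp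

lemma smooth1_add: "smooth1 g \<Longrightarrow> smooth1 h \<Longrightarrow> smooth1 (\<lambda>x. g x + h x)"
  unfolding smooth1_def by (subst funpow_dx_add) (auto intro: diffable_add)

lemma smooth1_mult: "smooth1 g \<Longrightarrow> smooth1 h \<Longrightarrow> smooth1 (\<lambda>x. g x * h x)"
proof -
  have "\<forall>g h. smooth1 g \<longrightarrow> smooth1 h \<longrightarrow> (\<forall>k\<le>m. diffable ((dx^^k) (\<lambda>x. g x * h x)))" for m
  proof (induction m)
    case 0 then show ?case by (auto intro: diffable_mult smooth1_diffable)
  next
    case (Suc m)
    show ?case
    proof (intro allI impI)
      fix g h k assume g: "smooth1 g" and h: "smooth1 h" and k: "k \<le> Suc m"
      show "diffable ((dx^^k) (\<lambda>x. g x * h x))"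
      proof (cases k)
        case 0 then show ?thesis using g h by (auto intro: diffable_mult smooth1_diffable)
      next
        case (Suc j)
        have a: "\<forall>k\<le>m. diffable ((dx^^k) (\<lambda>x. g x * dx h x))"
         and b: "\<forall>k\<le>m. diffable ((dx^^k) (\<lambda>x. dx g x * h x))"
          using Suc.IH g h smooth1_dx by blast+
        have "(dx^^k) (\<lambda>x. g x * h x) = (dx^^j) (\<lambda>x. g x * dx h x + dx g x * h x)"
          using Suc g h by (simp del: funpow.simps add: funpow_dx_Suc dx_mult smooth1_diffable)
        also have "\<dots> = (\<lambda>x. (dx^^j) (\<lambda>x. g x * dx h x) x + (dx^^j) (\<lambda>x. dx g x * h x) x)"
          using a b Suc k by (intro funpow_dx_add) auto
        finally show ?thesis using a b Suc k by (auto intro: diffable_add)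
      qed
    qed
  qed
  then show "smooth1 g \<Longrightarrow> smooth1 h \<Longrightarrow> smooth1 (\<lambda>x. g x * h x)"
    unfolding smooth1_def[of "\<lambda>x. g x * h x"] by blast
qed

lemma smooth1_cmult: "smooth1 h \<Longrightarrow> smooth1 (\<lambda>x. c * h x)"
  by (rule smooth1_mult) auto

lemma smooth1_diff: "smooth1 g \<Longrightarrow> smooth1 h \<Longrightarrow> smooth1 (\<lambda>x. g x - h x)"
  using smooth1_add[OF _ smooth1_cmult[of h "- 1"], of g] by simp

lemma smooth1_sum: "finite A \<Longrightarrow> (\<And>i. i \<in> A \<Longrightarrow> smooth1 (h i)) \<Longrightarrow> smooth1 (\<lambda>x. \<Sum>i\<in>A. h i x)"
  by (induction A rule: finite_induct) (auto intro: smooth1_add)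

section \<open>Behaviour at minus infinity\<close>

definition null_at_bot :: "(real \<Rightarrow> complex) \<Rightarrow> bool" where
  "null_at_bot h \<longleftrightarrow> smooth1 h \<and> (\<forall>m. ((dx^^m) h \<longlongrightarrow> 0) at_bot)"

text \<open>Needed because \<open>b\<^sub>1 = 1\<close> and \<open>f\<^sub>1\<^sub>,\<^sub>x / f\<^sub>1\<close> need not vanish at \<open>-\<infinity>\<close>.\<close>
definition settles_at_bot :: "(real \<Rightarrow> complex) \<Rightarrow> bool" where
  "settles_at_bot h \<longleftrightarrow> smooth1 h \<and> (\<exists>l. (h \<longlongrightarrow> l) at_bot) \<and> null_at_bot (dx h)"

lemma null_at_bot_iff_dx:
  "null_at_bot h \<longleftrightarrow> diffable h \<and> (h \<longlongrightarrow> 0) at_bot \<and> null_at_bot (dx h)"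
proof -
  have "(\<forall>m. ((dx^^m) h \<longlongrightarrow> 0) at_bot) \<longleftrightarrow>
      ((dx^^0) h \<longlongrightarrow> 0) at_bot \<and> (\<forall>m. ((dx^^Suc m) h \<longlongrightarrow> 0) at_bot)"
    by (metis not0_implies_Suc)
  then show ?thesis
    unfolding null_at_bot_def funpow_dx_Suc by (auto simp: smooth1_iff_dx[of h])
qed

lemma null_at_bot_smooth1: "null_at_bot h \<Longrightarrow> smooth1 h"
  and null_at_bot_tendsto: "null_at_bot h \<Longrightarrow> (h \<longlongrightarrow> 0) at_bot"
  and null_at_bot_dx: "null_at_bot h \<Longrightarrow> null_at_bot (dx h)"
  unfolding null_at_bot_iff_dx[of h] by (auto simp: null_at_bot_def smooth1_iff_dx[of h])

lemma settles_at_bot_smooth1: "settles_at_bot h \<Longrightarrow> smooth1 h"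
  and settles_at_bot_tendsto: "settles_at_bot h \<Longrightarrow> \<exists>l. (h \<longlongrightarrow> l) at_bot"
  and settles_at_bot_dx: "settles_at_bot h \<Longrightarrow> null_at_bot (dx h)"
  unfolding settles_at_bot_def by auto

lemma null_imp_settles_at_bot: "null_at_bot h \<Longrightarrow> settles_at_bot h"
  unfolding settles_at_bot_def using null_at_bot_smooth1 null_at_bot_tendsto null_at_bot_dx by blast

lemma null_at_bot_0 [simp]: "null_at_bot (\<lambda>x. 0)"
  unfolding null_at_bot_def funpow_dx_const by simp

lemma settles_at_bot_const [simp]: "settles_at_bot (\<lambda>x. c)"
  unfolding settles_at_bot_def by auto

lemma null_at_bot_add: "null_at_bot g \<Longrightarrow> null_at_bot h \<Longrightarrow> null_at_bot (\<lambda>x. g x + h x)"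
  unfolding null_at_bot_def
  by (auto simp: funpow_dx_add_smooth1 smooth1_add) (metis (no_types) add_0 tendsto_add)

lemma null_at_bot_mult: "settles_at_bot g \<Longrightarrow> null_at_bot h \<Longrightarrow> null_at_bot (\<lambda>x. g x * h x)"
proof -
  have "\<forall>g h. settles_at_bot g \<longrightarrow> null_at_bot h \<longrightarrow> ((dx^^m) (\<lambda>x. g x * h x) \<longlongrightarrow> 0) at_bot" for m
  proof (induction m)
    case 0
    show ?case
      by (auto dest!: settles_at_bot_tendsto null_at_bot_tendsto)
         (metis (no_types) mult_zero_right tendsto_mult)
  next
    case (Suc m)
    show ?case
    proof (intro allI impI)
      fix g h assume g: "settles_at_bot g" and h: "null_at_bot h"
      have sg: "smooth1 g" and sh: "smooth1 h"
        using g h settles_at_bot_smooth1 null_at_bot_smooth1 by blast+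
      have "(dx^^Suc m) (\<lambda>x. g x * h x) =
          (\<lambda>x. (dx^^m) (\<lambda>x. g x * dx h x) x + (dx^^m) (\<lambda>x. h x * dx g x) x)"
        using sg sh by (simp del: funpow.simps add: funpow_dx_Suc dx_mult smooth1_diffable
            funpow_dx_add_smooth1 smooth1_mult smooth1_dx mult.commute)
      moreover have "((dx^^m) (\<lambda>x. g x * dx h x) \<longlongrightarrow> 0) at_bot"
        using Suc.IH g h null_at_bot_dx by blast
      moreover have "((dx^^m) (\<lambda>x. h x * dx g x) \<longlongrightarrow> 0) at_bot"
        using Suc.IH g h settles_at_bot_dx null_imp_settles_at_bot by blast
      ultimately show "((dx^^Suc m) (\<lambda>x. g x * h x) \<longlongrightarrow> 0) at_bot"
        using tendsto_add[where a=0 and b=0] by simp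
    qed
  qed
  then show "settles_at_bot g \<Longrightarrow> null_at_bot h \<Longrightarrow> null_at_bot (\<lambda>x. g x * h x)"
    unfolding null_at_bot_def[of "\<lambda>x. g x * h x"]
    by (auto intro: smooth1_mult settles_at_bot_smooth1 null_at_bot_smooth1)
qed

lemma null_at_bot_mult': "null_at_bot g \<Longrightarrow> settles_at_bot h \<Longrightarrow> null_at_bot (\<lambda>x. g x * h x)"
  using null_at_bot_mult[of h g] by (simp add: mult.commute)

lemma null_at_bot_cmult: "null_at_bot h \<Longrightarrow> null_at_bot (\<lambda>x. c * h x)"
  by (rule null_at_bot_mult) auto

lemma null_at_bot_diff: "null_at_bot g \<Longrightarrow> null_at_bot h \<Longrightarrow> null_at_bot (\<lambda>x. g x - h x)"
  using null_at_bot_add[OF _ null_at_bot_cmult[of h "- 1"], of g] by simp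

lemma settles_at_bot_add: "settles_at_bot g \<Longrightarrow> settles_at_bot h \<Longrightarrow> settles_at_bot (\<lambda>x. g x + h x)"
  unfolding settles_at_bot_def
  by (auto simp: dx_add smooth1_diffable intro: smooth1_add null_at_bot_add tendsto_add)

lemma settles_at_bot_mult: "settles_at_bot g \<Longrightarrow> settles_at_bot h \<Longrightarrow> settles_at_bot (\<lambda>x. g x * h x)"
proof -
  assume g: "settles_at_bot g" and h: "settles_at_bot h"
  then have "smooth1 g" "smooth1 h" by (auto intro: settles_at_bot_smooth1)
  moreover have "\<exists>l. ((\<lambda>x. g x * h x) \<longlongrightarrow> l) at_bot"
    using g h by (auto dest!: settles_at_bot_tendsto intro: tendsto_mult)
  moreover have "null_at_bot (\<lambda>x. g x * dx h x + dx g x * h x)"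
    using g h by (intro null_at_bot_add null_at_bot_mult null_at_bot_mult' settles_at_bot_dx)
  ultimately show ?thesis
    unfolding settles_at_bot_def by (simp add: dx_mult smooth1_diffable smooth1_mult)
qed

lemma settles_at_bot_cmult: "settles_at_bot h \<Longrightarrow> settles_at_bot (\<lambda>x. c * h x)"
  by (rule settles_at_bot_mult) auto

section \<open>Integration from minus infinity\<close>

definition left_integrable :: "(real \<Rightarrow> complex) \<Rightarrow> bool" where
  "left_integrable h \<longleftrightarrow> (\<forall>x. h absolutely_integrable_on {..x})"

definition pinv1 :: "(real \<Rightarrow> complex) \<Rightarrow> real \<Rightarrow> complex" where
  "pinv1 g = (\<lambda>x. integral {..x} g)"

lemma left_integrable_diff:
  "left_integrable g \<Longrightarrow> left_integrable h \<Longrightarrow> left_integrable (\<lambda>x. g x - h x)"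
  unfolding left_integrable_def by auto

lemma left_integrable_cmult: "left_integrable h \<Longrightarrow> left_integrable (\<lambda>x. c * h x)"
  unfolding left_integrable_def by auto

lemma integral_atMost_split:
  assumes "left_integrable g" "a \<le> x"
  shows "integral {..x} g = integral {..a} g + integral {a..x} g"
proof -
  have "g integrable_on {..a}" using assms unfolding left_integrable_def
    using set_lebesgue_integral_eq_integral(1) by blast
  moreover have "g integrable_on {a..x}" using assms unfolding left_integrable_def
    by (meson absolutely_integrable_on_subinterval atMost_iff atLeastAtMost_iff subsetI
        set_lebesgue_integral_eq_integral(1))
  ultimately have "(g has_integral (integral {..a} g + integral {a..x} g)) ({..a} \<union> {a..x})"
  proof (intro has_integral_Un)
    have "{..a} \<inter> {a..x} = {a}" using assms by auto
    then show "negligible ({..a} \<inter> {a..x})" by simp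
  qed auto
  moreover have "{..a} \<union> {a..x} = {..x}" using assms by auto
  ultimately show ?thesis by (metis integral_unique)
qed

lemma has_vector_derivative_pinv1:
  assumes "left_integrable g" "continuous_on UNIV g"
  shows "(pinv1 g has_vector_derivative g x) (at x)"
proof -
  define a b where "a = x - 1" and "b = x + 1"
  have "((\<lambda>u. integral {a..u} g) has_vector_derivative g x) (at x within {a..b})"
    by (rule integral_has_vector_derivative)
       (auto simp: a_def b_def intro: continuous_on_subset[OF assms(2)])
  moreover have "at x within {a..b} = at x"
    by (rule at_within_interior) (auto simp: a_def b_def)
  ultimately have "((\<lambda>u. integral {a..u} g) has_vector_derivative g x) (at x)" by simp
  then have "((\<lambda>u. integral {..a} g + integral {a..u} g) has_vector_derivative g x) (at x)"
    using has_vector_derivative_add[OF has_vector_derivative_const] by fastforce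
  then show ?thesis unfolding pinv1_def
    by (rule has_vector_derivative_transform_within_open[where S="{a<..<b}"])
       (auto simp: a_def b_def integral_atMost_split[OF assms(1), symmetric])
qed

lemma diffable_pinv1: "left_integrable g \<Longrightarrow> diffable g \<Longrightarrow> diffable (pinv1 g)"
  and dx_pinv1: "left_integrable g \<Longrightarrow> diffable g \<Longrightarrow> dx (pinv1 g) = g"
  using has_vector_derivative_imp_dx[of "pinv1 g" g] has_vector_derivative_pinv1 diffable_continuous_on
  by blast+

lemma pinv1_tendsto_0:
  assumes "left_integrable g"
  shows "(pinv1 g \<longlongrightarrow> 0) at_bot"
proof -
  have int: "set_integrable lebesgue {..0::real} g" using assms unfolding left_integrable_def by blast
  have "((\<lambda>a. set_lebesgue_integral lebesgue {a..0} g) \<longlongrightarrow> set_lebesgue_integral lebesgue {..0} g) at_bot"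
    by (rule tendsto_set_lebesgue_integral_at_bot) (use int in auto)
  then have "((\<lambda>a. integral {..0} g - set_lebesgue_integral lebesgue {a..0} g) \<longlongrightarrow>
       integral {..0} g - set_lebesgue_integral lebesgue {..0} g) at_bot"
    by (intro tendsto_diff tendsto_const)
  then have t: "((\<lambda>a. integral {..0} g - set_lebesgue_integral lebesgue {a..0} g) \<longlongrightarrow> 0) at_bot"
    using set_lebesgue_integral_eq_integral(2)[OF int] by simp
  have "eventually (\<lambda>a. integral {..0} g - set_lebesgue_integral lebesgue {a..0} g = pinv1 g a) at_bot"
    unfolding eventually_at_bot_linorder
  proof (intro exI[of _ 0] allI impI)
    fix a :: real assume "a \<le> 0"
    have "set_integrable lebesgue {a..0} g" using int
      by (rule set_integrable_subset) auto
    then show "integral {..0} g - set_lebesgue_integral lebesgue {a..0} g = pinv1 g a"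
      using integral_atMost_split[OF assms \<open>a \<le> 0\<close>]
        set_lebesgue_integral_eq_integral(2)[where f=g and S="{a..0}"]
      unfolding pinv1_def by simp
  qed
  then show ?thesis using t by (rule Lim_transform_eventually[rotated])
qed

lemma dx_eq_0_imp_const:
  assumes "diffable r" "dx r = (\<lambda>x. 0)"
  shows "\<exists>c. r = (\<lambda>x. c)"
proof -
  have "\<And>x. (r has_vector_derivative 0) (at x within UNIV)"
    using diffable_has_vector_derivative[OF assms(1)] assms(2) by simp
  then obtain c where "\<And>x. r x = c"
    using has_vector_derivative_zero_constant[of UNIV r] by auto
  then show ?thesis by blast
qed

lemma eq_by_dx_tendsto_at_bot:
  assumes "diffable p" "diffable q" "dx p = dx q" "(p \<longlongrightarrow> l) at_bot" "(q \<longlongrightarrow> l) at_bot"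
  shows "p = q"
proof -
  have "dx (\<lambda>x. p x - q x) = (\<lambda>x. 0)" using assms by (simp add: dx_diff)
  moreover have "diffable (\<lambda>x. p x - q x)" using assms(1,2) by (rule diffable_diff)
  ultimately obtain c where c: "(\<lambda>x. p x - q x) = (\<lambda>x. c)" using dx_eq_0_imp_const by blast
  have "((\<lambda>x. p x - q x) \<longlongrightarrow> l - l) at_bot" using assms(4,5) by (rule tendsto_diff)
  then have "((\<lambda>x::real. c) \<longlongrightarrow> 0) at_bot" using c by simp
  then have "c = 0" by (rule tendsto_const_iff[OF trivial_limit_at_bot_linorder, THEN iffD1])
  show ?thesis
  proof
    fix x show "p x = q x" using fun_cong[OF c, of x] \<open>c = 0\<close> by simp
  qed
qed

lemma left_integrable_dx_imp_tendsto:
  assumes "diffable h" "diffable (dx h)" "left_integrable (dx h)"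
  shows "\<exists>l. (h \<longlongrightarrow> l) at_bot"
proof -
  have d2: "diffable (pinv1 (dx h))" using diffable_pinv1 assms(2,3) by blast
  have "dx (\<lambda>x. h x - pinv1 (dx h) x) = (\<lambda>x. 0)"
    using assms d2 by (simp add: dx_diff dx_pinv1)
  moreover have "diffable (\<lambda>x. h x - pinv1 (dx h) x)" using assms(1) d2 by (rule diffable_diff)
  ultimately obtain c where c: "(\<lambda>x. h x - pinv1 (dx h) x) = (\<lambda>x. c)"
    using dx_eq_0_imp_const by blast
  have "((\<lambda>x. pinv1 (dx h) x + c) \<longlongrightarrow> 0 + c) at_bot"
    using pinv1_tendsto_0[OF assms(3)] by (intro tendsto_add tendsto_const)
  moreover have "(\<lambda>x. pinv1 (dx h) x + c) = h"
  proof
    fix x show "pinv1 (dx h) x + c = h x" using fun_cong[OF c, of x] by (metis diff_eq_eq add.commute)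
  qed
  ultimately show ?thesis by auto
qed

lemma bounded_image_atMost:
  fixes b :: "real \<Rightarrow> complex"
  assumes "continuous_on UNIV b" "(b \<longlongrightarrow> l) at_bot"
  shows "bounded (b ` {..x})"
proof -
  have "eventually (\<lambda>y. dist (b y) l < 1) at_bot"
    using assms(2) unfolding tendsto_iff by simp
  then obtain a where a: "\<And>y. y \<le> a \<Longrightarrow> dist (b y) l < 1"
    unfolding eventually_at_bot_linorder by blast
  define a' where "a' = min a x"
  have "bounded (b ` {..a'})"
    unfolding bounded_iff
  proof (intro exI ballI)
    fix z assume "z \<in> b ` {..a'}"
    then obtain y where y: "y \<le> a" "z = b y" by (auto simp: a'_def)
    have "norm (b y) \<le> norm l + norm (b y - l)" by (rule norm_triangle_sub)
    moreover have "norm (b y - l) < 1" using a[OF y(1)] by (simp add: dist_norm)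
    ultimately show "norm z \<le> norm l + 1" using y by simp
  qed
  moreover have "bounded (b ` {a'..x})"
    by (intro compact_imp_bounded compact_continuous_image continuous_on_subset[OF assms(1)]) auto
  ultimately have "bounded (b ` {..a'} \<union> b ` {a'..x})" by simp
  moreover have "{..x} \<subseteq> {..a'} \<union> {a'..x}" by auto
  then have "b ` {..x} \<subseteq> b ` {..a'} \<union> b ` {a'..x}" by blast
  ultimately show ?thesis using bounded_subset by blast
qed

lemma left_integrable_mult_settles:
  assumes h: "left_integrable h" "diffable h" and b: "settles_at_bot b"
  shows "left_integrable (\<lambda>x. h x * b x)"
  unfolding left_integrable_def
proof
  fix x
  obtain l where l: "(b \<longlongrightarrow> l) at_bot" using b settles_at_bot_tendsto by blast
  have cb: "continuous_on UNIV b"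
    using b settles_at_bot_smooth1 smooth1_diffable diffable_continuous_on by blast
  have "(\<lambda>y. b y * h y) absolutely_integrable_on {..x}"
  proof (rule absolutely_integrable_bounded_measurable_product[OF bilinear_times])
    show "b \<in> borel_measurable (lebesgue_on {..x})"
      by (rule continuous_imp_measurable_on_sets_lebesgue[OF continuous_on_subset[OF cb]]) auto
    show "{..x} \<in> sets lebesgue" by simp
    show "bounded (b ` {..x})" using bounded_image_atMost cb l by blast
    show "h absolutely_integrable_on {..x}" using h unfolding left_integrable_def by blast
  qed
  then show "(\<lambda>y. h y * b y) absolutely_integrable_on {..x}" by (simp add: mult.commute)
qed

lemma null_at_bot_pinv1: "left_integrable g \<Longrightarrow> null_at_bot g \<Longrightarrow> null_at_bot (pinv1 g)"
  using null_at_bot_iff_dx[of "pinv1 g"] diffable_pinv1 dx_pinv1 pinv1_tendsto_0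
    null_at_bot_smooth1 smooth1_diffable by metis

section \<open>The recursion operator on a line\<close>

definition decaying1 :: "(real \<Rightarrow> complex) \<Rightarrow> bool" where
  "decaying1 v \<longleftrightarrow> null_at_bot v \<and> (\<forall>m. left_integrable ((dx^^m) v))"

lemma settles_at_bot_D:
  assumes "settles_at_bot b"
  shows "smooth1 b" "diffable b" "diffable (dx b)" "diffable (dx (dx b))" "diffable (dx (dx (dx b)))"
    "null_at_bot (dx b)" "null_at_bot (dx (dx b))"
  using assms settles_at_bot_dx settles_at_bot_smooth1 null_at_bot_dx null_at_bot_smooth1
    smooth1_diffable smooth1_dx by blast+

lemma decaying1_D:
  assumes "decaying1 v"
  shows "null_at_bot v" "null_at_bot (dx v)" "settles_at_bot v" "settles_at_bot (dx v)"
    "smooth1 v" "diffable v" "diffable (dx v)" "left_integrable v" "left_integrable (dx v)"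
proof -
  from assms have v: "null_at_bot v" and li: "\<And>m. left_integrable ((dx^^m) v)"
    unfolding decaying1_def by auto
  from li[of 0] li[of 1] show "left_integrable v" "left_integrable (dx v)" by simp_all
  from v show "null_at_bot v" "null_at_bot (dx v)" "settles_at_bot v" "settles_at_bot (dx v)"
    "smooth1 v" "diffable v" "diffable (dx v)"
    using null_at_bot_dx null_imp_settles_at_bot null_at_bot_smooth1 smooth1_diffable smooth1_dx
    by blast+
qed

lemma pinv1_mult_decaying1:
  assumes a: "decaying1 a" and b: "settles_at_bot b"
  shows "diffable (pinv1 (\<lambda>y. a y * b y))" "dx (pinv1 (\<lambda>y. a y * b y)) = (\<lambda>y. a y * b y)"
    "(pinv1 (\<lambda>y. a y * b y) \<longlongrightarrow> 0) at_bot"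
proof -
  have i: "left_integrable (\<lambda>y. a y * b y)"
    using left_integrable_mult_settles decaying1_D(6,8)[OF a] b by blast
  have d: "diffable (\<lambda>y. a y * b y)"
    using decaying1_D(6)[OF a] settles_at_bot_D(2)[OF b] by (rule diffable_mult)
  show "diffable (pinv1 (\<lambda>y. a y * b y))" "dx (pinv1 (\<lambda>y. a y * b y)) = (\<lambda>y. a y * b y)"
    using diffable_pinv1[OF i d] dx_pinv1[OF i d] .
  show "(pinv1 (\<lambda>y. a y * b y) \<longlongrightarrow> 0) at_bot" using pinv1_tendsto_0[OF i] .
qed

lemma pinv1_mult_eqI:
  assumes "decaying1 a" "settles_at_bot b"
    and "diffable F" "dx F = (\<lambda>y. a y * b y)" "(F \<longlongrightarrow> 0) at_bot"
  shows "pinv1 (\<lambda>y. a y * b y) = F"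
  using eq_by_dx_tendsto_at_bot pinv1_mult_decaying1[OF assms(1,2)] assms(3-5) by metis

text \<open>\<open>Lop1\<close> and \<open>bseq1\<close> are \<open>Lop\<close> and \<open>bseq\<close> at a fixed time (lemmas \<open>slice_Lop\<close>,
  \<open>slice_bseq\<close>); the other operators with suffix \<open>1\<close> are named after those of the statement in
  the same way.\<close>
definition Lop1 :: "(real \<Rightarrow> complex) \<Rightarrow> (real \<Rightarrow> complex) \<Rightarrow> real \<Rightarrow> complex" where
  "Lop1 v b = (\<lambda>x. - (1/4) * dx (dx b) x - v x * b x + (1/2) * pinv1 (\<lambda>y. dx v y * b y) x)"

fun bseq1 :: "(real \<Rightarrow> complex) \<Rightarrow> nat \<Rightarrow> real \<Rightarrow> complex" where
  "bseq1 v 0 = (\<lambda>x. 0)"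
| "bseq1 v (Suc 0) = (\<lambda>x. 1)"
| "bseq1 v (Suc (Suc k)) = Lop1 v (bseq1 v (Suc k))"

text \<open>\<open>Mop v\<close> is \<open>-\<partial> \<circ> Lop1 v\<close> (lemma \<open>dx_Lop1\<close>): a differential operator, so the non-local
  recursion for the \<open>b\<^sub>k\<close> becomes the local one \<open>\<partial>b\<^sub>k\<^sub>+\<^sub>1 = - Mop v b\<^sub>k\<close>.\<close>
definition Mop :: "(real \<Rightarrow> complex) \<Rightarrow> (real \<Rightarrow> complex) \<Rightarrow> real \<Rightarrow> complex" where
  "Mop v g = (\<lambda>x. (1/4) * dx (dx (dx g)) x + v x * dx g x + (1/2) * dx v x * g x)"

lemma left_integrable_dx_mult:
  "decaying1 v \<Longrightarrow> settles_at_bot b \<Longrightarrow> left_integrable (\<lambda>y. dx v y * b y)"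
  using left_integrable_mult_settles decaying1_D by blast

lemma null_at_bot_Lop1:
  assumes v: "decaying1 v" and b: "settles_at_bot b"
  shows "null_at_bot (Lop1 v b)"
proof -
  note V = decaying1_D[OF v] and B = settles_at_bot_D[OF b]
  have "null_at_bot (pinv1 (\<lambda>y. dx v y * b y))"
    using null_at_bot_pinv1 left_integrable_dx_mult[OF v b] null_at_bot_mult' V b by blast
  moreover have "null_at_bot (\<lambda>x. v x * b x)" using null_at_bot_mult' V b by blast
  ultimately show ?thesis unfolding Lop1_def
    using B by (intro null_at_bot_add null_at_bot_diff null_at_bot_cmult) auto
qed

lemma dx_Lop1:
  assumes v: "decaying1 v" and b: "settles_at_bot b"
  shows "dx (Lop1 v b) = (\<lambda>x. - Mop v b x)"
proof -
  note V = decaying1_D[OF v] and B = settles_at_bot_D[OF b]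
  have i: "left_integrable (\<lambda>y. dx v y * b y)" by (rule left_integrable_dx_mult[OF v b])
  have d: "diffable (\<lambda>y. dx v y * b y)" "diffable (\<lambda>x. v x * b x)"
    using V B by (simp_all add: diffable_mult)
  have "dx (Lop1 v b) = (\<lambda>x. - (1/4) * dx (dx (dx b)) x - (v x * dx b x + dx v x * b x)
      + (1/2) * (dx v x * b x))"
    unfolding Lop1_def using B V d diffable_pinv1[OF i d(1)]
    by (simp only: dx_add dx_diff dx_cmult dx_mult diffable_add diffable_diff diffable_cmult
        diffable_mult dx_pinv1[OF i d(1)])
  then show ?thesis unfolding Mop_def by (simp add: algebra_simps)
qed

lemma null_at_bot_bseq1: "decaying1 v \<Longrightarrow> null_at_bot (bseq1 v (Suc (Suc k)))"
proof (induction k)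
  case 0
  then show ?case using null_at_bot_Lop1[of v "\<lambda>x. 1"] by simp
next
  case (Suc k)
  then show ?case using null_at_bot_Lop1 null_imp_settles_at_bot by simp
qed

lemma settles_at_bot_bseq1:
  assumes "decaying1 v"
  shows "settles_at_bot (bseq1 v k)"
proof (cases "k \<ge> 2")
  case True
  then obtain j where "k = Suc (Suc j)" by (metis add_2_eq_Suc le_Suc_ex)
  then show ?thesis using null_at_bot_bseq1[OF assms] null_imp_settles_at_bot by simp
next
  case False
  then have "k = 0 \<or> k = 1" by auto
  then show ?thesis by auto
qed

lemma Mop_0 [simp]: "Mop v (\<lambda>x. 0) = (\<lambda>x. 0)"
  unfolding Mop_def by simp

lemma dx_bseq1: "decaying1 v \<Longrightarrow> dx (bseq1 v (Suc k)) = (\<lambda>x. - Mop v (bseq1 v k) x)"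
  by (cases k) (simp_all add: dx_Lop1 settles_at_bot_bseq1)

section \<open>Darboux transformation of the recursion\<close>

lemmas dx_rules = dx_add dx_diff dx_cmult dx_mult dx_minus dx_const diffable_add diffable_diff
  diffable_cmult diffable_mult diffable_minus diffable_const smooth1_diffable smooth1_dx

definition Dcorr :: "(real \<Rightarrow> complex) \<Rightarrow> (real \<Rightarrow> complex) \<Rightarrow> real \<Rightarrow> complex" where
  "Dcorr s g = (\<lambda>x. (1/2) * dx (dx g) x - dx s x * g x - s x * dx g x)"

lemma Mop_intertwining:
  fixes s F G H v w :: "real \<Rightarrow> complex" and xi :: complex
  assumes smooth: "smooth1 s" "smooth1 F" "smooth1 G" "smooth1 H"
    and v: "v = (\<lambda>x. - xi - s x * s x - dx s x)"
    and w: "w = (\<lambda>x. - xi - s x * s x + dx s x)"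
    and G: "dx G = (\<lambda>x. - Mop v F x)" and H: "dx H = (\<lambda>x. - Mop v G x)"
  shows "dx (\<lambda>x. H x - xi * G x + Dcorr s G x)
       = (\<lambda>x. - Mop w (\<lambda>x. G x - xi * F x + Dcorr s F x) x)"
  unfolding Dcorr_def Mop_def w
  apply (simp only: dx_rules smooth G[unfolded Mop_def v] H[unfolded Mop_def v])
  apply (rule ext)
  apply (simp add: algebra_simps)
  apply (simp add: field_simps)
  done

lemma Mop_add: "smooth1 v \<Longrightarrow> smooth1 g \<Longrightarrow> smooth1 h \<Longrightarrow>
    Mop v (\<lambda>x. g x + h x) = (\<lambda>x. Mop v g x + Mop v h x)"
  and Mop_cmult: "smooth1 v \<Longrightarrow> smooth1 g \<Longrightarrow> Mop v (\<lambda>x. c * g x) = (\<lambda>x. c * Mop v g x)"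
  unfolding Mop_def by (simp_all only: dx_rules) (simp_all add: fun_eq_iff algebra_simps)

lemma Dcorr_add: "smooth1 s \<Longrightarrow> smooth1 g \<Longrightarrow> smooth1 h \<Longrightarrow>
    Dcorr s (\<lambda>x. g x + h x) = (\<lambda>x. Dcorr s g x + Dcorr s h x)"
  and Dcorr_cmult: "smooth1 s \<Longrightarrow> smooth1 g \<Longrightarrow> Dcorr s (\<lambda>x. c * g x) = (\<lambda>x. c * Dcorr s g x)"
  unfolding Dcorr_def by (simp_all only: dx_rules) (simp_all add: fun_eq_iff algebra_simps)

lemma null_at_bot_Dcorr: "settles_at_bot s \<Longrightarrow> settles_at_bot g \<Longrightarrow> null_at_bot (Dcorr s g)"
  unfolding Dcorr_def
  by (intro null_at_bot_diff null_at_bot_cmult null_at_bot_mult null_at_bot_mult' settles_at_bot_D)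

text \<open>\<open>Eseq v \<xi> k = (\<Sum>i<k. \<xi>^(k-1-i) * b\<^sub>i[v])\<close>.\<close>
fun Eseq :: "(real \<Rightarrow> complex) \<Rightarrow> complex \<Rightarrow> nat \<Rightarrow> real \<Rightarrow> complex" where
  "Eseq v xi 0 = (\<lambda>x. 0)"
| "Eseq v xi (Suc k) = (\<lambda>x. bseq1 v k x + xi * Eseq v xi k x)"

lemma settles_at_bot_Eseq: "decaying1 v \<Longrightarrow> settles_at_bot (Eseq v xi k)"
  by (induction k) (auto intro!: settles_at_bot_add settles_at_bot_cmult settles_at_bot_bseq1)

lemma smooth1_Eseq: "decaying1 v \<Longrightarrow> smooth1 (Eseq v xi k)"
  and smooth1_bseq1: "decaying1 v \<Longrightarrow> smooth1 (bseq1 v k)"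
  using settles_at_bot_Eseq settles_at_bot_bseq1 settles_at_bot_smooth1 by blast+

lemma dx_Eseq:
  assumes v: "decaying1 v"
  shows "dx (Eseq v xi (Suc k)) = (\<lambda>x. - Mop v (Eseq v xi k) x)"
proof (induction k)
  case 0 then show ?case by simp
next
  case (Suc k)
  note smooth = smooth1_bseq1[OF v] smooth1_Eseq[OF v] decaying1_D(5)[OF v]
  have "dx (Eseq v xi (Suc (Suc k))) = (\<lambda>x. dx (bseq1 v (Suc k)) x + xi * dx (Eseq v xi (Suc k)) x)"
    unfolding Eseq.simps(2)[of v xi "Suc k"] using smooth
    by (simp only: dx_add dx_cmult diffable_cmult smooth1_diffable)
  also have "\<dots> = (\<lambda>x. - (Mop v (bseq1 v k) x + xi * Mop v (Eseq v xi k) x))"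
    using Suc dx_bseq1[OF v] by (simp add: algebra_simps)
  also have "\<dots> = (\<lambda>x. - Mop v (Eseq v xi (Suc k)) x)"
    using smooth by (simp add: Mop_add Mop_cmult smooth1_cmult)
  finally show ?case .
qed

text \<open>At a fixed time, \<open>v = u\<close>, \<open>w = \<bar>u\<close> and \<open>s = f\<^sub>1\<^sub>,\<^sub>x / f\<^sub>1\<close>: the first Riccati equation is the
  spectral equation of \<open>f\<^sub>1\<close>, the second is \<open>\<bar>u = u + 2 s'\<close>.\<close>
locale riccati_pair =
  fixes v w s :: "real \<Rightarrow> complex" and xi :: complex
  assumes decaying_v: "decaying1 v" and decaying_w: "decaying1 w" and settles_s: "settles_at_bot s"
    and v_eq: "v = (\<lambda>x. - xi - s x * s x - dx s x)"
    and w_eq: "w = (\<lambda>x. - xi - s x * s x + dx s x)"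
begin

lemma bseq1_darboux: "bseq1 w k = (\<lambda>x. bseq1 v k x + Dcorr s (Eseq v xi k) x)"
proof -
  define c where "c k = (\<lambda>x. bseq1 v k x + Dcorr s (Eseq v xi k) x)" for k
  have c_Suc: "c k = (\<lambda>x. Eseq v xi (Suc k) x - xi * Eseq v xi k x + Dcorr s (Eseq v xi k) x)" for k
    unfolding c_def by simp
  have settles_c: "settles_at_bot (c k)" for k
    unfolding c_def
    using settles_at_bot_bseq1[OF decaying_v] null_imp_settles_at_bot
      null_at_bot_Dcorr[OF settles_s settles_at_bot_Eseq[OF decaying_v]]
    by (blast intro: settles_at_bot_add)
  have null_c: "null_at_bot (c (Suc (Suc k)))" for k
    unfolding c_def
    using null_at_bot_bseq1[OF decaying_v]
      null_at_bot_Dcorr[OF settles_s settles_at_bot_Eseq[OF decaying_v]]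
    by (blast intro: null_at_bot_add)
  have dx_c: "dx (c (Suc k)) = (\<lambda>x. - Mop w (c k) x)" for k
    unfolding c_Suc
    by (rule Mop_intertwining) (use smooth1_Eseq[OF decaying_v] settles_at_bot_smooth1[OF settles_s]
        v_eq w_eq dx_Eseq[OF decaying_v] in blast)+
  have "bseq1 w k = c k"
  proof (induction k rule: induct_nat_012)
    case (ge2 k)
    have "bseq1 w (Suc (Suc k)) = Lop1 w (c (Suc k))" using ge2 by simp
    also have "\<dots> = c (Suc (Suc k))"
    proof (rule eq_by_dx_tendsto_at_bot)
      show "dx (Lop1 w (c (Suc k))) = dx (c (Suc (Suc k)))"
        using dx_Lop1[OF decaying_w settles_c] dx_c by simp
      show "(Lop1 w (c (Suc k)) \<longlongrightarrow> 0) at_bot" "(c (Suc (Suc k)) \<longlongrightarrow> 0) at_bot"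
        using null_at_bot_Lop1[OF decaying_w settles_c] null_c null_at_bot_tendsto by blast+
      show "diffable (Lop1 w (c (Suc k)))" "diffable (c (Suc (Suc k)))"
        using null_at_bot_Lop1[OF decaying_w settles_c] null_c null_at_bot_smooth1 smooth1_diffable
        by blast+
    qed
    finally show ?case .
  qed (simp_all add: c_def Dcorr_def)
  then show ?thesis unfolding c_def .
qed

end

section \<open>The operator \<open>A\<close> on a line\<close>

definition Aop_of :: "(real \<Rightarrow> complex) \<Rightarrow> (real \<Rightarrow> complex) \<Rightarrow> real \<Rightarrow> complex" where
  "Aop_of \<beta> g = (\<lambda>x. - (1/2) * dx \<beta> x * g x + \<beta> x * dx g x)"

definition horner :: "(nat \<Rightarrow> real \<Rightarrow> complex) \<Rightarrow> complex \<Rightarrow> nat \<Rightarrow> real \<Rightarrow> complex" where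
  "horner g l m = (\<lambda>x. \<Sum>i\<in>{0..m}. g i x * l ^ (m - i))"

lemma horner_0: "horner g l 0 = g 0"
  unfolding horner_def by simp

lemma horner_Suc: "horner g l (Suc m) = (\<lambda>x. l * horner g l m x + g (Suc m) x)"
proof
  fix x
  have "horner g l (Suc m) x = (\<Sum>i\<in>{0..m}. g i x * l ^ (Suc m - i)) + g (Suc m) x"
    unfolding horner_def by (simp add: sum.atLeast0_atMost_Suc)
  also have "(\<Sum>i\<in>{0..m}. g i x * l ^ (Suc m - i)) = l * horner g l m x"
    unfolding horner_def sum_distrib_left by (rule sum.cong) (auto simp: Suc_diff_le)
  finally show "horner g l (Suc m) x = l * horner g l m x + g (Suc m) x" .
qed

lemma smooth1_horner: "(\<And>i. smooth1 (g i)) \<Longrightarrow> smooth1 (horner g l m)"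
  unfolding horner_def by (intro smooth1_sum smooth1_mult) auto

lemma dx_horner: "(\<And>i. diffable (g i)) \<Longrightarrow> dx (horner g l m) = horner (\<lambda>i. dx (g i)) l m"
  unfolding horner_def by (subst dx_sum) (auto simp: dx_mult intro: diffable_mult)

text \<open>\<open>Aop1 n v \<lambda>\<close> is \<open>A\<^sup>(\<^sup>n\<^sup>)(v, \<lambda>)\<close>: since \<open>a\<^sub>i = - b\<^sub>i\<^sub>,\<^sub>x / 2\<close>, it is \<open>Aop_of \<beta>\<close> for the
  generating polynomial \<open>\<beta> = (\<Sum>i\<le>n+1. b\<^sub>i \<lambda>\<^sup>n\<^sup>+\<^sup>1\<^sup>-\<^sup>i)\<close>.\<close>
definition Aop1 :: "nat \<Rightarrow> (real \<Rightarrow> complex) \<Rightarrow> complex \<Rightarrow> (real \<Rightarrow> complex) \<Rightarrow> real \<Rightarrow> complex" where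
  "Aop1 n v lam = Aop_of (horner (bseq1 v) lam (n + 1))"

definition Qop1 :: "nat \<Rightarrow> nat \<Rightarrow> complex \<Rightarrow> complex \<Rightarrow> (real \<Rightarrow> complex) \<Rightarrow> (nat \<Rightarrow> real \<Rightarrow> complex)
    \<Rightarrow> complex \<Rightarrow> (real \<Rightarrow> complex) \<Rightarrow> real \<Rightarrow> complex" where
  "Qop1 n N alpha eta v ph lam g = (\<lambda>x. Aop1 n v lam g x + eta * g x
      + alpha * (\<Sum>j\<in>{1..N}. ph j x * pinv1 (\<lambda>y. ph j y * g y) x))"

lemma Aop_of_intertwining:
  fixes s G Q psi v :: "real \<Rightarrow> complex" and lam xi :: complex
  assumes smooth: "smooth1 s" "smooth1 G" "smooth1 Q" "smooth1 psi"
    and v: "v = (\<lambda>x. - xi - s x * s x - dx s x)"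
    and psi: "dx (dx psi) = (\<lambda>x. - (lam + v x) * psi x)"
    and Q: "dx Q = (\<lambda>x. - (lam * dx G x + Mop v G x))"
  shows "(\<lambda>x. dx (Aop_of (\<lambda>x. (lam - xi) * G x + Q x) psi) x
           - dx (\<lambda>x. - (1/2) * dx Q x + s x * Q x) x * psi x
           - s x * Aop_of (\<lambda>x. (lam - xi) * G x + Q x) psi x)
       = Aop_of (\<lambda>x. (lam - xi) * G x + Q x + Dcorr s G x) (\<lambda>x. dx psi x - s x * psi x)"
  unfolding Aop_of_def Dcorr_def
  apply (simp only: dx_rules smooth Q[unfolded Mop_def v] psi[unfolded v])
  apply (rule ext)
  apply (simp add: algebra_simps)
  apply (simp add: field_simps)
  done

definition dt1 :: "(real \<Rightarrow> complex) \<Rightarrow> (real \<Rightarrow> complex) \<Rightarrow> real \<Rightarrow> complex" where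
  "dt1 s g = (\<lambda>x. dx g x - s x * g x)"

context riccati_pair
begin

lemma smooth1_v: "smooth1 v" and smooth1_s: "smooth1 s"
  using decaying1_D(5)[OF decaying_v] settles_at_bot_smooth1[OF settles_s] .

lemma horner_bseq1_Eseq:
  "horner (bseq1 v) lam m = (\<lambda>x. (lam - xi) * horner (Eseq v xi) lam m x + Eseq v xi (Suc m) x)"
  by (induction m) (simp_all add: horner_0 horner_Suc algebra_simps)

lemma horner_bseq1_xi: "horner (bseq1 v) xi m = Eseq v xi (Suc m)"
  by (induction m) (simp_all add: horner_0 horner_Suc algebra_simps)

lemma dx_Eseq_horner:
  "dx (Eseq v xi (Suc m))
     = (\<lambda>x. - (lam * dx (horner (Eseq v xi) lam m) x + Mop v (horner (Eseq v xi) lam m) x))"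
proof (induction m)
  case 0 then show ?case by (simp add: horner_0)
next
  case (Suc m)
  note smooth = smooth1_horner[OF smooth1_Eseq[OF decaying_v]] smooth1_Eseq[OF decaying_v] smooth1_v
  have "dx (horner (Eseq v xi) lam (Suc m))
      = (\<lambda>x. lam * dx (horner (Eseq v xi) lam m) x + dx (Eseq v xi (Suc m)) x)"
    unfolding horner_Suc[of _ _ m] using smooth
    by (simp only: dx_add dx_cmult diffable_cmult smooth1_diffable)
  moreover have "Mop v (horner (Eseq v xi) lam (Suc m))
      = (\<lambda>x. lam * Mop v (horner (Eseq v xi) lam m) x + Mop v (Eseq v xi (Suc m)) x)"
    unfolding horner_Suc using smooth by (simp del: Eseq.simps add: Mop_add Mop_cmult smooth1_cmult)
  ultimately show ?case
    using Suc dx_Eseq[OF decaying_v, of xi "Suc m"] by (simp del: Eseq.simps add: algebra_simps)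
qed

lemma horner_bseq1_darboux:
  "horner (bseq1 w) lam m = (\<lambda>x. horner (bseq1 v) lam m x + Dcorr s (horner (Eseq v xi) lam m) x)"
proof (induction m)
  case 0 then show ?case by (simp add: horner_0 bseq1_darboux)
next
  case (Suc m)
  note smooth = smooth1_horner[OF smooth1_Eseq[OF decaying_v]] smooth1_Eseq[OF decaying_v] smooth1_s
  show ?case
    unfolding horner_Suc[of _ _ m] Suc bseq1_darboux[of "Suc m"]
    using smooth by (simp del: Eseq.simps add: Dcorr_add Dcorr_cmult smooth1_cmult algebra_simps)
qed

lemma Aop1_darboux:
  fixes n :: nat
  assumes psi: "smooth1 psi" "dx (dx psi) = (\<lambda>x. - (lam + v x) * psi x)"
  defines "Q \<equiv> horner (bseq1 v) xi (n + 1)"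
  shows "(\<lambda>x. dx (Aop1 n v lam psi) x
           - (- (1/2) * dx (dx Q) x + (s x * dx Q x + dx s x * Q x)) * psi x
           - s x * Aop1 n v lam psi x)
       = Aop1 n w lam (dt1 s psi)"
proof -
  have smooth_Q: "smooth1 Q"
    unfolding Q_def by (rule smooth1_horner[OF smooth1_bseq1[OF decaying_v]])
  have "dx (\<lambda>x. - (1/2) * dx Q x + s x * Q x)
      = (\<lambda>x. - (1/2) * dx (dx Q) x + (s x * dx Q x + dx s x * Q x))"
    using smooth_Q smooth1_s by (simp only: dx_rules)
  moreover have "Q = Eseq v xi (Suc (n + 1))"
    unfolding Q_def by (rule horner_bseq1_xi)
  moreover note Aop_of_intertwining[OF smooth1_s smooth1_horner[OF smooth1_Eseq[OF decaying_v]]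
      smooth1_Eseq[OF decaying_v] psi(1) v_eq psi(2) dx_Eseq_horner[where m = "n + 1" and lam = lam]]
  ultimately show ?thesis
    unfolding Aop1_def horner_bseq1_darboux horner_bseq1_Eseq dt1_def by simp
qed

end

section \<open>Darboux transformation at a fixed time\<close>

lemma inverse_csqrt_square: "(1 / csqrt z) * (1 / csqrt z) = 1 / z"
proof -
  have "csqrt z * csqrt z = z" using power2_csqrt[of z] by (simp add: power2_eq_square)
  then show ?thesis by (metis divide_divide_eq_left' divide_divide_eq_right div_by_1 times_divide_eq_right)
qed

context riccati_pair
begin

lemma dx_s: "dx s = (\<lambda>x. - xi - s x * s x - v x)"
  using v_eq by (auto simp: fun_eq_iff algebra_simps)

lemma smooth1_dt1: "smooth1 g \<Longrightarrow> smooth1 (dt1 s g)"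
  unfolding dt1_def using smooth1_s by (intro smooth1_diff smooth1_mult smooth1_dx)

lemma darboux_eigenfunction:
  assumes "smooth1 g" and "dx (dx g) = (\<lambda>x. - (l + v x) * g x)"
  shows "dx (dx (dt1 s g)) = (\<lambda>x. - (l + w x) * dt1 s g x)"
  unfolding w_eq dt1_def using assms(1) smooth1_s smooth1_v
  apply (simp only: dx_rules assms(2) dx_s)
  apply (rule ext)
  apply (simp add: algebra_simps)
  done

end

locale darboux_data = riccati_pair v w s xi for v w s xi +
  fixes f :: "real \<Rightarrow> complex" and lams :: "nat \<Rightarrow> complex" and N :: nat
    and ph phb :: "nat \<Rightarrow> real \<Rightarrow> complex" and n :: nat and alpha eta :: complex
  assumes decaying_f: "decaying1 f" and f_nonzero: "\<And>x. f x \<noteq> 0"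
    and s_eq: "s = (\<lambda>x. dx f x / f x)"
    and decaying_ph: "\<And>j. j \<in> {1..N} \<Longrightarrow> decaying1 (ph j)"
    and ph_eigen: "\<And>j. j \<in> {1..N} \<Longrightarrow> dx (dx (ph j)) = (\<lambda>x. - (lams j + v x) * ph j x)"
    and lams_ne_xi: "\<And>j. j \<in> {1..N} \<Longrightarrow> lams j \<noteq> xi"
    and phb_eq: "\<And>j. j \<in> {1..N} \<Longrightarrow> phb j = (\<lambda>x. (1 / csqrt (lams j - xi)) * dt1 s (ph j) x)"
    and decaying_phb: "\<And>j. j \<in> {1..N} \<Longrightarrow> decaying1 (phb j)"
begin

lemma dx_f: "dx f = (\<lambda>x. s x * f x)"
  using f_nonzero unfolding s_eq by (auto simp: fun_eq_iff)

lemma smooth1_f: "smooth1 f"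
  and smooth1_ph: "j \<in> {1..N} \<Longrightarrow> smooth1 (ph j)"
  using decaying1_D(5) decaying_f decaying_ph by blast+

lemma dt1_ph_tendsto_0:
  assumes j: "j \<in> {1..N}"
  shows "(dt1 s (ph j) \<longlongrightarrow> 0) at_bot"
proof -
  have "csqrt (lams j - xi) \<noteq> 0" using lams_ne_xi[OF j] by simp
  then have "dt1 s (ph j) = (\<lambda>x. csqrt (lams j - xi) * phb j x)"
    using phb_eq[OF j] by (auto simp: fun_eq_iff)
  moreover have "((\<lambda>x. csqrt (lams j - xi) * phb j x) \<longlongrightarrow> csqrt (lams j - xi) * 0) at_bot"
    using decaying_phb[OF j] decaying1_D(1) null_at_bot_tendsto by (intro tendsto_mult tendsto_const) blast
  ultimately show ?thesis by simp
qed

lemma pinv1_ph_f: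
  assumes j: "j \<in> {1..N}"
  shows "pinv1 (\<lambda>y. ph j y * f y) = (\<lambda>x. (- 1 / (lams j - xi)) * (dt1 s (ph j) x * f x))"
proof (rule pinv1_mult_eqI)
  show "decaying1 (ph j)" "settles_at_bot f"
    using decaying_ph[OF j] decaying1_D(3)[OF decaying_f] .
  note smooth = smooth1_ph[OF j] smooth1_f smooth1_s
  show "diffable (\<lambda>x. (- 1 / (lams j - xi)) * (dt1 s (ph j) x * f x))"
    unfolding dt1_def using smooth by (simp only: dx_rules)
  have "lams j - xi \<noteq> 0" using lams_ne_xi[OF j] by simp
  then show "dx (\<lambda>x. (- 1 / (lams j - xi)) * (dt1 s (ph j) x * f x)) = (\<lambda>y. ph j y * f y)"
    unfolding dt1_def using smooth
    by (simp only: dx_rules ph_eigen[OF j] dx_s dx_f) (simp add: fun_eq_iff field_simps)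
  have "((\<lambda>x. (- 1 / (lams j - xi)) * (dt1 s (ph j) x * f x)) \<longlongrightarrow> (- 1 / (lams j - xi)) * (0 * 0)) at_bot"
    using dt1_ph_tendsto_0[OF j] decaying1_D(1)[OF decaying_f] null_at_bot_tendsto
    by (intro tendsto_mult tendsto_const) blast+
  then show "((\<lambda>x. (- 1 / (lams j - xi)) * (dt1 s (ph j) x * f x)) \<longlongrightarrow> 0) at_bot" by simp
qed

text \<open>By \<open>pinv1_ph_f\<close>, \<open>kappa j = \<phi>\<^sub>j \<partial>\<^sup>-\<^sup>1(\<phi>\<^sub>j f) / f\<close>.\<close>
definition kappa :: "nat \<Rightarrow> real \<Rightarrow> complex" where
  "kappa j = (\<lambda>x. (- 1 / (lams j - xi)) * (ph j x * dt1 s (ph j) x))"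

lemma smooth1_kappa: "j \<in> {1..N} \<Longrightarrow> smooth1 (kappa j)"
  unfolding kappa_def by (intro smooth1_cmult smooth1_mult smooth1_dt1 smooth1_ph)

lemma dx_kappa:
  assumes j: "j \<in> {1..N}"
  shows "dx (kappa j) x = (ph j x)\<^sup>2 - (phb j x)\<^sup>2"
proof -
  define c where "c = lams j - xi"
  have c: "c \<noteq> 0" using lams_ne_xi[OF j] by (simp add: c_def)
  have "dx (kappa j) x = (- 1 / c) * (dt1 s (ph j) x * dt1 s (ph j) x - c * (ph j x * ph j x))"
    unfolding kappa_def dt1_def c_def using smooth1_ph[OF j] smooth1_s
    by (simp only: dx_rules ph_eigen[OF j] dx_s) (simp add: algebra_simps)
  also have "\<dots> = (ph j x)\<^sup>2 - (1 / c) * (dt1 s (ph j) x)\<^sup>2"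
    using c by (simp add: field_simps power2_eq_square)
  also have "(1 / c) * (dt1 s (ph j) x)\<^sup>2 = (phb j x)\<^sup>2"
  proof -
    have "(phb j x)\<^sup>2 = ((1 / csqrt c) * (1 / csqrt c)) * (dt1 s (ph j) x)\<^sup>2"
      unfolding phb_eq[OF j] c_def by (simp only: power2_eq_square mult_ac)
    then show ?thesis unfolding inverse_csqrt_square by simp
  qed
  finally show ?thesis .
qed

definition beta_xi :: "real \<Rightarrow> complex" where
  "beta_xi = horner (bseq1 v) xi (n + 1)"

lemma smooth1_beta_xi: "smooth1 beta_xi"
  unfolding beta_xi_def by (rule smooth1_horner[OF smooth1_bseq1[OF decaying_v]])

definition rho :: "real \<Rightarrow> complex" where
  "rho = (\<lambda>x. - (1/2) * dx beta_xi x + s x * beta_xi x + eta + alpha * (\<Sum>j\<in>{1..N}. kappa j x))"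

lemma Qop1_f: "Qop1 n N alpha eta v ph xi f = (\<lambda>x. rho x * f x)"
proof
  fix x
  have "(\<Sum>j\<in>{1..N}. ph j x * pinv1 (\<lambda>y. ph j y * f y) x) = (\<Sum>j\<in>{1..N}. kappa j x) * f x"
    unfolding sum_distrib_right by (rule sum.cong) (auto simp: pinv1_ph_f kappa_def)
  then show "Qop1 n N alpha eta v ph xi f x = rho x * f x"
    unfolding Qop1_def Aop1_def Aop_of_def rho_def dx_f beta_xi_def by (simp add: algebra_simps)
qed

lemma smooth1_rho: "smooth1 rho"
  unfolding rho_def using smooth1_beta_xi smooth1_s smooth1_kappa
  by (intro smooth1_add smooth1_mult smooth1_sum smooth1_dx smooth1_const) auto

lemma dx_rho: "dx rho = (\<lambda>x. - (1/2) * dx (dx beta_xi) x + (s x * dx beta_xi x + dx s x * beta_xi x)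
      + alpha * (\<Sum>j\<in>{1..N}. dx (kappa j) x))"
proof -
  have "diffable (kappa j)" if "j \<in> {1..N}" for j
    using smooth1_kappa[OF that] by (rule smooth1_diffable)
  then show ?thesis
    unfolding rho_def using smooth1_beta_xi smooth1_s
    by (simp only: dx_rules dx_sum diffable_sum finite_atLeastAtMost add_0_right)
qed

lemma dx_Qop1_f_over_f:
  "(\<lambda>x. (dx (Qop1 n N alpha eta v ph xi f) x * f x - Qop1 n N alpha eta v ph xi f x * dx f x) / (f x)\<^sup>2)
     = dx rho"
proof -
  have "diffable (Qop1 n N alpha eta v ph xi f)"
    unfolding Qop1_f using smooth1_rho smooth1_f by (simp add: diffable_mult smooth1_diffable)
  from dx_divide[OF this smooth1_diffable[OF smooth1_f] f_nonzero]
  have "dx (\<lambda>x. Qop1 n N alpha eta v ph xi f x / f x)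
      = (\<lambda>x. (dx (Qop1 n N alpha eta v ph xi f) x * f x - Qop1 n N alpha eta v ph xi f x * dx f x)
          / (f x)\<^sup>2)" .
  moreover have "(\<lambda>x. Qop1 n N alpha eta v ph xi f x / f x) = rho"
    unfolding Qop1_f using f_nonzero by auto
  ultimately show ?thesis by simp
qed

lemma kdv_darboux:
  "(\<lambda>y. - 2 * bseq1 w (n + 2) y - 2 * alpha * (\<Sum>j\<in>{1..N}. (phb j y)\<^sup>2))
   = (\<lambda>y. - 2 * bseq1 v (n + 2) y - 2 * alpha * (\<Sum>j\<in>{1..N}. (ph j y)\<^sup>2) + 2 * dx rho y)"
proof
  fix y
  have sum_dx_kappa:
    "(\<Sum>j\<in>{1..N}. dx (kappa j) y) = (\<Sum>j\<in>{1..N}. (ph j y)\<^sup>2) - (\<Sum>j\<in>{1..N}. (phb j y)\<^sup>2)"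
    unfolding sum_subtractf[symmetric] by (rule sum.cong) (simp_all add: dx_kappa)
  have "n + 2 = Suc (n + 1)" by simp
  then have bseq1_w: "bseq1 w (n + 2) y = bseq1 v (n + 2) y + Dcorr s beta_xi y"
    unfolding beta_xi_def horner_bseq1_xi bseq1_darboux by (simp only:)
  show "- 2 * bseq1 w (n + 2) y - 2 * alpha * (\<Sum>j\<in>{1..N}. (phb j y)\<^sup>2)
      = - 2 * bseq1 v (n + 2) y - 2 * alpha * (\<Sum>j\<in>{1..N}. (ph j y)\<^sup>2) + 2 * dx rho y"
    unfolding dx_rho bseq1_w sum_dx_kappa Dcorr_def by (simp add: algebra_simps)
qed

end

locale darboux_eigen = darboux_data v w s xi f lams N ph phb n alpha eta
  for v w s xi f lams N ph phb n alpha eta +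
  fixes psi :: "real \<Rightarrow> complex" and lam :: complex
  assumes decaying_psi: "decaying1 psi" and decaying_psibar: "decaying1 (dt1 s psi)"
    and psi_eigen: "dx (dx psi) = (\<lambda>x. - (lam + v x) * psi x)"
begin

lemma smooth1_psi: "smooth1 psi"
  using decaying1_D(5)[OF decaying_psi] .

lemma pinv1_phb_psibar:
  assumes j: "j \<in> {1..N}"
  shows "pinv1 (\<lambda>y. phb j y * dt1 s psi y) = (\<lambda>x. (1 / csqrt (lams j - xi)) *
     (dt1 s (ph j) x * psi x + (lams j - xi) * pinv1 (\<lambda>y. ph j y * psi y) x))"
proof (rule pinv1_mult_eqI)
  show "decaying1 (phb j)" "settles_at_bot (dt1 s psi)"
    using decaying_phb[OF j] decaying1_D(3)[OF decaying_psibar] .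
  note I = pinv1_mult_decaying1[OF decaying_ph[OF j] decaying1_D(3)[OF decaying_psi]]
  note smooth = smooth1_ph[OF j] smooth1_psi smooth1_s I(1)
  show "diffable (\<lambda>x. (1 / csqrt (lams j - xi)) *
     (dt1 s (ph j) x * psi x + (lams j - xi) * pinv1 (\<lambda>y. ph j y * psi y) x))"
    unfolding dt1_def using smooth by (simp only: dx_rules)
  have "lams j - xi \<noteq> 0" using lams_ne_xi[OF j] by simp
  then show "dx (\<lambda>x. (1 / csqrt (lams j - xi)) *
      (dt1 s (ph j) x * psi x + (lams j - xi) * pinv1 (\<lambda>y. ph j y * psi y) x))
      = (\<lambda>y. phb j y * dt1 s psi y)"
    unfolding dt1_def phb_eq[OF j] using smooth
    by (simp only: I(2) dx_rules ph_eigen[OF j] dx_s) (simp add: fun_eq_iff field_simps)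
  have "((\<lambda>x. (1 / csqrt (lams j - xi)) *
      (dt1 s (ph j) x * psi x + (lams j - xi) * pinv1 (\<lambda>y. ph j y * psi y) x))
      \<longlongrightarrow> (1 / csqrt (lams j - xi)) * (0 * 0 + (lams j - xi) * 0)) at_bot"
    using dt1_ph_tendsto_0[OF j] decaying1_D(1)[OF decaying_psi] null_at_bot_tendsto I(3)
    by (intro tendsto_mult tendsto_add tendsto_const) blast+
  then show "((\<lambda>x. (1 / csqrt (lams j - xi)) *
      (dt1 s (ph j) x * psi x + (lams j - xi) * pinv1 (\<lambda>y. ph j y * psi y) x)) \<longlongrightarrow> 0) at_bot"
    by simp
qed

definition source_term :: "nat \<Rightarrow> real \<Rightarrow> complex" where
  "source_term j = (\<lambda>x. ph j x * pinv1 (\<lambda>y. ph j y * psi y) x)"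

lemma source_darboux:
  assumes j: "j \<in> {1..N}"
  shows "dx (source_term j) x - dx (kappa j) x * psi x - s x * source_term j x
    = phb j x * pinv1 (\<lambda>y. phb j y * dt1 s psi y) x"
proof -
  note I = pinv1_mult_decaying1[OF decaying_ph[OF j] decaying1_D(3)[OF decaying_psi]]
  define P where "P = pinv1 (\<lambda>y. ph j y * psi y)"
  define c where "c = lams j - xi"
  have c: "c \<noteq> 0" using lams_ne_xi[OF j] by (simp add: c_def)
  have e1: "dx (\<lambda>x. ph j x * P x) x = ph j x * (ph j x * psi x) + dx (ph j) x * P x"
    unfolding P_def using smooth1_ph[OF j] I(1) by (simp add: dx_mult I(2) smooth1_diffable)
  have e2: "dx (kappa j) x = (- 1 / c) * (dt1 s (ph j) x * dt1 s (ph j) x - c * (ph j x * ph j x))"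
    unfolding kappa_def dt1_def c_def using smooth1_ph[OF j] smooth1_s
    by (simp only: dx_rules ph_eigen[OF j] dx_s) (simp add: algebra_simps)
  have e3: "phb j x * pinv1 (\<lambda>y. phb j y * dt1 s psi y) x
      = ((1 / csqrt c) * (1 / csqrt c)) * (dt1 s (ph j) x * (dt1 s (ph j) x * psi x + c * P x))"
    unfolding pinv1_phb_psibar[OF j] unfolding phb_eq[OF j] P_def c_def by (simp only: mult_ac)
  show ?thesis
    unfolding source_term_def P_def[symmetric] e1 e2 e3 inverse_csqrt_square
    using c by (simp add: dt1_def field_simps)
qed

lemma Qop1_psi: "Qop1 n N alpha eta v ph lam psi
    = (\<lambda>x. Aop1 n v lam psi x + eta * psi x + alpha * (\<Sum>j\<in>{1..N}. source_term j x))"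
  unfolding Qop1_def source_term_def ..

lemma dx_Qop1_psi:
  "dx (Qop1 n N alpha eta v ph lam psi) x
     = dx (Aop1 n v lam psi) x + eta * dx psi x + alpha * (\<Sum>j\<in>{1..N}. dx (source_term j) x)"
proof -
  have diffable_S: "diffable (source_term j)" if "j \<in> {1..N}" for j
    unfolding source_term_def
    using smooth1_ph[OF that]
      pinv1_mult_decaying1(1)[OF decaying_ph[OF that] decaying1_D(3)[OF decaying_psi]]
    by (simp add: diffable_mult smooth1_diffable)
  have "diffable (\<lambda>x. \<Sum>j\<in>{1..N}. source_term j x)"
    by (rule diffable_sum) (auto intro: diffable_S)
  moreover have "dx (\<lambda>x. \<Sum>j\<in>{1..N}. source_term j x) = (\<lambda>x. \<Sum>j\<in>{1..N}. dx (source_term j) x)"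
    by (rule dx_sum) (auto intro: diffable_S)
  moreover have "diffable (Aop1 n v lam psi)"
    unfolding Aop1_def Aop_of_def using smooth1_horner[OF smooth1_bseq1[OF decaying_v]] smooth1_psi
    by (simp only: dx_rules)
  ultimately show ?thesis
    unfolding Qop1_psi using smooth1_psi
    by (simp only: dx_add dx_cmult diffable_add diffable_cmult smooth1_diffable)
qed

lemma Qop1_darboux:
  "(\<lambda>x. dx (Qop1 n N alpha eta v ph lam psi) x - dx rho x * psi x
        - s x * Qop1 n N alpha eta v ph lam psi x)
     = Qop1 n N alpha eta w phb lam (dt1 s psi)"
proof
  fix x
  have A: "dx (Aop1 n v lam psi) x
      - (- (1/2) * dx (dx beta_xi) x + (s x * dx beta_xi x + dx s x * beta_xi x)) * psi x
      - s x * Aop1 n v lam psi x = Aop1 n w lam (dt1 s psi) x"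
    using fun_cong[OF Aop1_darboux[OF smooth1_psi psi_eigen, of n], of x] unfolding beta_xi_def by simp
  have S: "(\<Sum>j\<in>{1..N}. dx (source_term j) x) - (\<Sum>j\<in>{1..N}. dx (kappa j) x) * psi x
      - s x * (\<Sum>j\<in>{1..N}. source_term j x)
      = (\<Sum>j\<in>{1..N}. phb j x * pinv1 (\<lambda>y. phb j y * dt1 s psi y) x)"
    unfolding sum_distrib_right sum_distrib_left sum_subtractf[symmetric]
    by (rule sum.cong) (simp_all add: source_darboux)
  show "dx (Qop1 n N alpha eta v ph lam psi) x - dx rho x * psi x
      - s x * Qop1 n N alpha eta v ph lam psi x = Qop1 n N alpha eta w phb lam (dt1 s psi) x"
    unfolding dx_Qop1_psi dx_rho
    unfolding Qop1_psi Qop1_def[of _ _ _ _ w] A[symmetric] S[symmetric]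
    by (simp add: dt1_def algebra_simps)
qed

end

section \<open>Functions of \<open>(x, t)\<close>\<close>

definition slice :: "fn \<Rightarrow> real \<Rightarrow> real \<Rightarrow> complex" where
  "slice g t = (\<lambda>y. g y t)"

lemma px_slice: "px g x t = dx (slice g t) x"
  unfolding slice_def px_def dx_def by simp

lemma slice_px: "slice (px g) t = dx (slice g t)"
  using px_slice unfolding slice_def by blast

lemma pinv_slice: "pinv g x t = pinv1 (slice g t) x"
  unfolding slice_def pinv_def pinv1_def by simp

lemma slice_Lop: "slice (Lop u b) t = Lop1 (slice u t) (slice b t)"
  unfolding Lop_def Lop1_def slice_def[of "Lop u b"]
  by (simp add: px_slice slice_px pinv_slice) (simp add: slice_def)

lemma slice_bseq: "slice (bseq u k) t = bseq1 (slice u t) k"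
  by (induction u k rule: bseq.induct) (simp_all add: slice_Lop, simp_all add: slice_def)

lemma bseq_slice: "bseq u k x t = bseq1 (slice u t) k x"
  using slice_bseq unfolding slice_def by metis

lemma Qop_slice:
  assumes "decaying1 (slice u t)"
  shows "Qop n N alpha eta u phi lam psi x t
    = Qop1 n N alpha eta (slice u t) (\<lambda>j. slice (phi j) t) lam (slice psi t) x"
proof -
  define B where "B = bseq1 (slice u t)"
  have diffable_B: "diffable (B i)" for i
    unfolding B_def using smooth1_bseq1[OF assms] by (rule smooth1_diffable)
  have "Aop n u lam psi x t = (\<Sum>i\<in>{0..n+1}.
      (- (1/2) * dx (B i) x * slice psi t x + B i x * dx (slice psi t) x) * lam ^ (n + 1 - i))"
    unfolding Aop_def aseq_def px_slice slice_bseq bseq_slice B_def by (simp add: slice_def)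
  also have "\<dots> = Aop1 n (slice u t) lam (slice psi t) x"
    unfolding Aop1_def Aop_of_def B_def[symmetric] dx_horner[OF diffable_B] unfolding horner_def
    by (simp add: sum.distrib sum_distrib_left sum_distrib_right algebra_simps sum_subtractf sum_negf)
  finally show ?thesis
    unfolding Qop_def Qop1_def by (simp add: pinv_slice) (simp add: slice_def)
qed

lemma eigen_slice_iff:
  "px (px g) x t + (l + v x t) * g x t = 0 \<longleftrightarrow> dx (dx (slice g t)) x = - (l + slice v t x) * slice g t x"
  unfolding px_slice slice_px by (metis add_eq_0_iff2 minus_mult_left slice_def)

definition jdiff :: "fn \<Rightarrow> bool" where
  "jdiff g \<longleftrightarrow> (\<forall>x t. (\<lambda>p. g (fst p) (snd p)) differentiable (at (x, t)))"

lemma smooth_jdiff_pd: "smooth g \<Longrightarrow> jdiff (pd ds g)"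
  unfolding smooth_def jdiff_def by blast

lemma smooth_jdiff: "smooth g \<Longrightarrow> jdiff g"
  unfolding smooth_def jdiff_def by (metis pd.simps(1))

lemma smooth_px: "smooth g \<Longrightarrow> smooth (px g)"
  and smooth_pt: "smooth g \<Longrightarrow> smooth (pt g)"
proof -
  have "pd ds (px g) = pd (ds @ [True]) g \<and> pd ds (pt g) = pd (ds @ [False]) g" for ds
  proof (induction ds)
    case (Cons a ds) then show ?case by (cases a) simp_all
  qed simp
  then show "smooth g \<Longrightarrow> smooth (px g)" "smooth g \<Longrightarrow> smooth (pt g)"
    unfolding smooth_def by metis+
qed

lemma jdiff_has_vector_derivative_x:
  assumes "jdiff g"
  shows "((\<lambda>y. g y t) has_vector_derivative px g x t) (at x)"
proof -
  have "(\<lambda>p. g (fst p) (snd p)) differentiable (at (x, t))"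
    using assms unfolding jdiff_def by blast
  then have "((\<lambda>p. g (fst p) (snd p)) \<circ> (\<lambda>y. (y, t))) differentiable (at x)"
    by (intro differentiable_chain_at differentiable_Pair differentiable_ident differentiable_const) auto
  then show ?thesis unfolding px_def by (simp add: o_def vector_derivative_works[symmetric])
qed

lemma jdiff_has_vector_derivative_t:
  assumes "jdiff g"
  shows "((\<lambda>s. g x s) has_vector_derivative pt g x t) (at t)"
proof -
  have "(\<lambda>p. g (fst p) (snd p)) differentiable (at (x, t))"
    using assms unfolding jdiff_def by blast
  then have "((\<lambda>p. g (fst p) (snd p)) \<circ> (\<lambda>s. (x, s))) differentiable (at t)"
    by (intro differentiable_chain_at differentiable_Pair differentiable_ident differentiable_const) auto
  then show ?thesis unfolding pt_def by (simp add: o_def vector_derivative_works[symmetric])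
qed

lemma jdiff_continuous: "jdiff g \<Longrightarrow> continuous_on UNIV (\<lambda>p. g (fst p) (snd p))"
  unfolding jdiff_def
  by (metis continuous_at_imp_continuous_on differentiable_imp_continuous_within prod.collapse)

lemma jdiff_continuous_swap: "jdiff g \<Longrightarrow> continuous_on S (\<lambda>(s, y). g y s)"
proof -
  assume "jdiff g"
  have "continuous_on UNIV (\<lambda>q. (\<lambda>p. g (fst p) (snd p)) ((\<lambda>q. (snd q, fst q)) q))"
    by (rule continuous_on_compose2[OF jdiff_continuous[OF \<open>jdiff g\<close>]]) (auto intro!: continuous_intros)
  then have "continuous_on UNIV (\<lambda>(s, y). g y s)" by (simp add: case_prod_beta')
  then show ?thesis by (rule continuous_on_subset) simp
qed

lemma jdiff_continuous_x: "jdiff g \<Longrightarrow> continuous_on S (\<lambda>y. g y t)"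
proof -
  assume "jdiff g"
  have "continuous_on UNIV (\<lambda>y. (\<lambda>p. g (fst p) (snd p)) ((\<lambda>y. (y, t)) y))"
    by (rule continuous_on_compose2[OF jdiff_continuous[OF \<open>jdiff g\<close>]]) (auto intro!: continuous_intros)
  then have "continuous_on UNIV (\<lambda>y. g y t)" by simp
  then show ?thesis by (rule continuous_on_subset) simp
qed

lemma pd_replicate_True: "pd (replicate m True) g x t = (dx^^m) (slice g t) x"
  by (induction m arbitrary: x) (simp_all add: slice_def px_slice)

lemma smooth1_slice:
  assumes "smooth g"
  shows "smooth1 (slice g t)"
proof -
  have "((\<lambda>y. pd (replicate m True) g y t) has_vector_derivative
      px (pd (replicate m True) g) x t) (at x)" for m x
    by (rule jdiff_has_vector_derivative_x[OF smooth_jdiff_pd[OF assms]])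
  then show ?thesis
    unfolding smooth1_def diffable_def pd_replicate_True by (blast intro: differentiableI_vector)
qed

lemma decaying_slice:
  assumes "decaying g"
  shows "decaying1 (slice g t)"
proof -
  have "((\<lambda>x. pd (replicate m True) g x t) \<longlongrightarrow> 0) at_bot"
    and "(\<lambda>y. pd (replicate m True) g y t) absolutely_integrable_on {..x}" for m x
    using assms unfolding decaying_def by blast+
  then show ?thesis
    using smooth1_slice assms
    unfolding decaying1_def null_at_bot_def left_integrable_def pd_replicate_True decaying_def
    by auto
qed

lemma integral_px:
  assumes "jdiff g" "x0 \<le> y"
  shows "g y s = g x0 s + integral {x0..y} (\<lambda>z. px g z s)"
proof -
  have "((\<lambda>z. px g z s) has_integral g y s - g x0 s) {x0..y}"
    using jdiff_has_vector_derivative_x[OF assms(1)]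
    by (intro fundamental_theorem_of_calculus[OF assms(2)]) (simp add: has_vector_derivative_at_within)
  then show ?thesis by (simp add: integral_unique)
qed

lemma pt_integral_px:
  assumes "smooth g" "x0 \<le> y"
  shows "pt g y s = pt g x0 s + integral {x0..y} (\<lambda>z. pt (px g) z s)"
proof -
  have j: "jdiff g" "jdiff (px g)" "jdiff (pt (px g))"
    using smooth_jdiff smooth_px smooth_pt assms(1) by blast+
  have "((\<lambda>s. integral (cbox x0 y) (\<lambda>z. px g z s)) has_vector_derivative
      integral (cbox x0 y) (\<lambda>z. pt (px g) z s)) (at s within UNIV)"
  proof (rule leibniz_rule_vector_derivative[where fx="\<lambda>s z. pt (px g) z s"])
    show "((\<lambda>s. px g z s) has_vector_derivative pt (px g) z s) (at s within UNIV)" for z s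
      using jdiff_has_vector_derivative_t[OF j(2)] by simp
    show "(\<lambda>z. px g z s) integrable_on cbox x0 y" for s
      by (rule integrable_continuous) (rule jdiff_continuous_x[OF j(2)])
    show "continuous_on (UNIV \<times> cbox x0 y) (\<lambda>(s, z). pt (px g) z s)"
      by (rule jdiff_continuous_swap[OF j(3)])
  qed auto
  from has_vector_derivative_add[OF jdiff_has_vector_derivative_t[OF j(1)] this[unfolded cbox_interval]]
  have "((\<lambda>s. g y s) has_vector_derivative pt g x0 s + integral {x0..y} (\<lambda>z. pt (px g) z s)) (at s)"
    using integral_px[OF j(1) assms(2)] by simp
  then show ?thesis unfolding pt_def by (rule vector_derivative_at)
qed

lemma pt_px_commute:
  assumes "smooth g"
  shows "pt (px g) x t = px (pt g) x t"
proof -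
  define x0 where "x0 = x - 1"
  have j: "jdiff (pt (px g))" using smooth_jdiff smooth_px smooth_pt assms by blast
  have "((\<lambda>y. integral {x0..y} (\<lambda>z. pt (px g) z t)) has_vector_derivative pt (px g) x t)
      (at x within {x0..x+1})"
    by (rule integral_has_vector_derivative) (auto simp: x0_def intro: jdiff_continuous_x[OF j])
  moreover have "at x within {x0..x+1} = at x"
    by (rule at_within_interior) (auto simp: x0_def)
  ultimately have "((\<lambda>y. pt g x0 t + integral {x0..y} (\<lambda>z. pt (px g) z t))
      has_vector_derivative pt (px g) x t) (at x)"
    using has_vector_derivative_add[OF has_vector_derivative_const] by fastforce
  then have "((\<lambda>y. pt g y t) has_vector_derivative pt (px g) x t) (at x)"
  proof (rule has_vector_derivative_transform_within_open[where S="{x0<..}"])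
    fix y assume "y \<in> {x0<..}"
    then show "pt g x0 t + integral {x0..y} (\<lambda>z. pt (px g) z t) = pt g y t"
      using pt_integral_px[OF assms, of x0 y t] by simp
  qed (auto simp: x0_def)
  then show ?thesis unfolding px_def by (simp add: vector_derivative_at)
qed

lemma smooth_has_vector_derivative_t: "smooth g \<Longrightarrow> ((\<lambda>s. g x s) has_vector_derivative pt g x t) (at t)"
  using jdiff_has_vector_derivative_t smooth_jdiff by blast

lemma pt_dt_psi:
  assumes f: "smooth f" "f x t \<noteq> 0" and psi: "smooth psi"
  shows "pt (dt_psi f psi) x t = pt (px psi) x t
    - (px f x t / f x t * pt psi x t
       + (pt (px f) x t * f x t - px f x t * pt f x t) / (f x t)\<^sup>2 * psi x t)"
proof -
  note d = smooth_has_vector_derivative_t[OF smooth_px[OF psi]]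
    smooth_has_vector_derivative_t[OF smooth_px[OF f(1)]]
    smooth_has_vector_derivative_t[OF f(1)] smooth_has_vector_derivative_t[OF psi]
  have "((\<lambda>s. px psi x s - px f x s / f x s * psi x s) has_vector_derivative
      pt (px psi) x t - (px f x t / f x t * pt psi x t
        + (pt (px f) x t * f x t - px f x t * pt f x t) / (f x t)\<^sup>2 * psi x t)) (at t)"
    by (rule has_vector_derivative_diff[OF d(1) has_vector_derivative_mult[OF
          has_vector_derivative_divide[OF d(2) d(3) f(2)] d(4)]])
  moreover have "(\<lambda>s. dt_psi f psi x s) = (\<lambda>s. px psi x s - px f x s / f x s * psi x s)"
    unfolding dt_psi_def ..
  ultimately show ?thesis unfolding pt_def by (simp add: vector_derivative_at)
qed

lemma px_log_derivative:
  assumes "smooth f" "\<And>x t. f x t \<noteq> 0"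
  shows "px (\<lambda>y s. px f y s / f y s) x t
    = (px (px f) x t * f x t - px f x t * px f x t) / (f x t * f x t)"
proof -
  have "diffable (slice (px f) t)" "diffable (slice f t)"
    using smooth1_slice smooth_px assms(1) smooth1_diffable by blast+
  moreover have "px (\<lambda>y s. px f y s / f y s) x t = dx (\<lambda>y. slice (px f) t y / slice f t y) x"
    unfolding px_slice by (simp add: slice_def)
  ultimately show ?thesis
    using assms(2) by (simp add: dx_divide px_slice power2_eq_square slice_def)
qed

lemma pt_dt_u:
  assumes "smooth u" "smooth f" "\<And>x t. f x t \<noteq> 0"
  shows "pt (dt_u u f) x t = pt u x t + 2 * (((px (px f) x t * pt f x t + pt (px (px f)) x t * f x t
       - (px f x t * pt (px f) x t + pt (px f) x t * px f x t)) * (f x t * f x t)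
       - (px (px f) x t * f x t - px f x t * px f x t) * (f x t * pt f x t + pt f x t * f x t))
       / (f x t * f x t)\<^sup>2)"
proof -
  note d = smooth_has_vector_derivative_t[OF smooth_px[OF smooth_px[OF assms(2)]]]
    smooth_has_vector_derivative_t[OF assms(2)] smooth_has_vector_derivative_t[OF smooth_px[OF assms(2)]]
  have nz: "f x t * f x t \<noteq> 0" using assms(3) by simp
  note numerator = has_vector_derivative_diff[OF has_vector_derivative_mult[OF d(1) d(2)]
      has_vector_derivative_mult[OF d(3) d(3)]]
  note quotient = has_vector_derivative_divide[OF numerator has_vector_derivative_mult[OF d(2) d(2)] nz]
  have "(\<lambda>s. dt_u u f x s)
      = (\<lambda>s. u x s + 2 * ((px (px f) x s * f x s - px f x s * px f x s) / (f x s * f x s)))"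
    unfolding dt_u_def px_log_derivative[OF assms(2,3)] ..
  then show ?thesis
    using vector_derivative_at[OF has_vector_derivative_add[OF smooth_has_vector_derivative_t[OF assms(1)]
        has_vector_derivative_mult_right[OF quotient, of 2]]]
    by (simp only: pt_def)
qed

text \<open>If \<open>F\<^sub>t = R F\<close>, then \<open>(ln F)\<^sub>x\<^sub>x\<close> evolves by \<open>R\<^sub>x\<^sub>x\<close>: the left-hand side is the time derivative
  of \<open>(F'' F - F'\<^sup>2) / F\<^sup>2\<close> with \<open>F\<^sub>t\<close>, \<open>F'\<^sub>t\<close>, \<open>F''\<^sub>t\<close> replaced by \<open>R F\<close>, \<open>(R F)'\<close>, \<open>(R F)''\<close>.\<close>
lemma dx_log_derivative_mult:
  assumes "smooth1 R" "smooth1 F" "F x \<noteq> 0"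
  shows "((dx (dx F) x * (R x * F x) + dx (dx (\<lambda>y. R y * F y)) x * F x
       - (dx F x * dx (\<lambda>y. R y * F y) x + dx (\<lambda>y. R y * F y) x * dx F x)) * (F x * F x)
       - (dx (dx F) x * F x - dx F x * dx F x) * (F x * (R x * F x) + R x * F x * F x))
       / (F x * F x)\<^sup>2 = dx (dx R) x"
  using assms by (simp only: dx_rules) (simp add: field_simps power2_eq_square)

lemma px_kdv_flux_slice:
  "px (\<lambda>y s. - 2 * bseq u (n + 2) y s - 2 * alpha * (\<Sum>j\<in>{1..N}. (phi j y s)\<^sup>2)) x t
   = dx (\<lambda>y. - 2 * bseq1 (slice u t) (n + 2) y - 2 * alpha * (\<Sum>j\<in>{1..N}. (slice (phi j) t y)\<^sup>2)) x"
  unfolding px_slice by (simp del: bseq.simps bseq1.simps add: slice_def bseq_slice)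

locale kdv_scs_darboux =
  fixes n N :: nat and alpha eta xi :: complex and lams :: "nat \<Rightarrow> complex"
    and u f1 :: fn and phi :: "nat \<Rightarrow> fn"
  assumes sol: "kdv_scs n N alpha lams u phi"
    and f1_lax: "lax_pair n N alpha eta u phi xi f1"
    and f1_nz: "\<forall>x t. f1 x t \<noteq> 0"
    and xi_ne: "\<forall>j\<in>{1..N}. lams j \<noteq> xi"
    and dec_u: "decaying u" and dec_phi: "\<forall>j\<in>{1..N}. decaying (phi j)"
    and dec_f1: "decaying f1"
    and dec_ubar: "decaying (dt_u u f1)"
    and dec_phibar: "\<forall>j\<in>{1..N}. decaying (dt_phi lams xi f1 phi j)"
begin

definition sigma :: "real \<Rightarrow> real \<Rightarrow> complex" where
  "sigma t = (\<lambda>x. dx (slice f1 t) x / slice f1 t x)"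

lemma slice_eigen:
  "\<forall>x t. px (px g) x t + (l + u x t) * g x t = 0 \<Longrightarrow>
    dx (dx (slice g t)) = (\<lambda>x. - (l + slice u t x) * slice g t x)"
  using eigen_slice_iff by blast

lemma slice_dt_psi: "slice (dt_psi f1 g) t = dt1 (sigma t) (slice g t)"
  unfolding dt_psi_def dt1_def sigma_def slice_def px_slice[unfolded slice_def] ..

lemma riccati_pair_slice: "riccati_pair (slice u t) (slice (dt_u u f1) t) (sigma t) xi"
proof -
  define v w F where "v = slice u t" and "w = slice (dt_u u f1) t" and "F = slice f1 t"
  have dv: "decaying1 v" and dw: "decaying1 w" and dF: "decaying1 F"
    unfolding v_def w_def F_def using decaying_slice dec_u dec_ubar dec_f1 by blast+
  have F_nz: "\<And>x. F x \<noteq> 0" unfolding F_def slice_def using f1_nz by blast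
  have F_eigen: "dx (dx F) = (\<lambda>x. - (xi + v x) * F x)"
    unfolding F_def v_def using slice_eigen f1_lax unfolding lax_pair_def by blast
  have sigma: "sigma t = (\<lambda>x. dx F x / F x)" unfolding sigma_def F_def ..
  have diffable_sigma: "diffable (sigma t)"
    unfolding sigma using diffable_divide decaying1_D(6,7)[OF dF] F_nz by blast
  have "dx (sigma t) = (\<lambda>x. (dx (dx F) x * F x - dx F x * dx F x) / (F x)\<^sup>2)"
    unfolding sigma using dx_divide decaying1_D(6,7)[OF dF] F_nz by blast
  then have dx_sigma: "dx (sigma t) = (\<lambda>x. - xi - sigma t x * sigma t x - v x)"
    unfolding F_eigen sigma using F_nz by (auto simp: fun_eq_iff field_simps power2_eq_square)
  have w: "w = (\<lambda>x. v x + 2 * dx (sigma t) x)"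
    unfolding w_def v_def sigma_def dt_u_def slice_def px_slice[unfolded slice_def] ..
  then have dx_sigma_vw: "dx (sigma t) = (\<lambda>x. (1/2) * (w x - v x))" by (simp add: fun_eq_iff)
  have "null_at_bot (dx (sigma t))"
    unfolding dx_sigma_vw using decaying1_D(1)[OF dv] decaying1_D(1)[OF dw]
    by (intro null_at_bot_cmult null_at_bot_diff)
  moreover have "left_integrable (dx (sigma t))"
    unfolding dx_sigma_vw using decaying1_D(8)[OF dv] decaying1_D(8)[OF dw]
    by (intro left_integrable_cmult left_integrable_diff)
  moreover from calculation have "smooth1 (sigma t)"
    using diffable_sigma smooth1_iff_dx null_at_bot_smooth1 by blast
  ultimately have "settles_at_bot (sigma t)"
    unfolding settles_at_bot_def
    using left_integrable_dx_imp_tendsto diffable_sigma smooth1_diffable smooth1_dx by blast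
  then show ?thesis
    unfolding v_def[symmetric] w_def[symmetric]
  proof (rule riccati_pair.intro[OF dv dw])
    show "v = (\<lambda>x. - xi - sigma t x * sigma t x - dx (sigma t) x)"
      using dx_sigma by (simp add: fun_eq_iff)
    show "w = (\<lambda>x. - xi - sigma t x * sigma t x + dx (sigma t) x)"
      using w dx_sigma by (simp add: fun_eq_iff)
  qed
qed

lemma darboux_data_slice:
  "darboux_data (slice u t) (slice (dt_u u f1) t) (sigma t) xi (slice f1 t) lams N
     (\<lambda>j. slice (phi j) t) (\<lambda>j. slice (dt_phi lams xi f1 phi j) t)"
proof (rule darboux_data.intro[OF riccati_pair_slice], unfold_locales)
  show "decaying1 (slice f1 t)" using decaying_slice dec_f1 by blast
  show "slice f1 t x \<noteq> 0" for x using f1_nz by (simp add: slice_def)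
  show "sigma t = (\<lambda>x. dx (slice f1 t) x / slice f1 t x)" unfolding sigma_def ..
  fix j assume j: "j \<in> {1..N}"
  show "decaying1 (slice (phi j) t)" "decaying1 (slice (dt_phi lams xi f1 phi j) t)"
    using decaying_slice dec_phi dec_phibar j by blast+
  show "dx (dx (slice (phi j) t)) = (\<lambda>x. - (lams j + slice u t x) * slice (phi j) t x)"
    using slice_eigen sol j unfolding kdv_scs_def by blast
  show "lams j \<noteq> xi" using xi_ne j by blast
  show "slice (dt_phi lams xi f1 phi j) t
      = (\<lambda>x. 1 / csqrt (lams j - xi) * dt1 (sigma t) (slice (phi j) t) x)"
    unfolding dt_phi_def dt1_def sigma_def slice_def px_slice[unfolded slice_def] ..
qed

lemma pt_slice_lax:
  "lax_pair n N alpha eta u phi l g \<Longrightarrow>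
     pt g x t = Qop1 n N alpha eta (slice u t) (\<lambda>j. slice (phi j) t) l (slice g t) x"
  unfolding lax_pair_def using Qop_slice decaying_slice dec_u by metis

lemma pt_px_slice_lax:
  assumes "decaying g" "lax_pair n N alpha eta u phi l g"
  shows "pt (px g) x t = dx (Qop1 n N alpha eta (slice u t) (\<lambda>j. slice (phi j) t) l (slice g t)) x"
proof -
  have "pt (px g) x t = px (pt g) x t"
    using pt_px_commute assms(1) unfolding decaying_def by blast
  also have "\<dots> = dx (slice (pt g) t) x" by (rule px_slice)
  also have "slice (pt g) t = Qop1 n N alpha eta (slice u t) (\<lambda>j. slice (phi j) t) l (slice g t)"
    using pt_slice_lax[OF assms(2)] unfolding slice_def by blast
  finally show ?thesis .
qed

lemma pt_px_px_slice_lax: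
  assumes "decaying g" "lax_pair n N alpha eta u phi l g"
  shows "pt (px (px g)) x t
    = dx (dx (Qop1 n N alpha eta (slice u t) (\<lambda>j. slice (phi j) t) l (slice g t))) x"
proof -
  have "pt (px (px g)) x t = px (pt (px g)) x t"
    using pt_px_commute smooth_px assms(1) unfolding decaying_def by blast
  also have "\<dots> = dx (slice (pt (px g)) t) x" by (rule px_slice)
  also have "slice (pt (px g)) t = dx (Qop1 n N alpha eta (slice u t) (\<lambda>j. slice (phi j) t) l (slice g t))"
    unfolding slice_def[of "pt (px g)"] pt_px_slice_lax[OF assms] ..
  finally show ?thesis .
qed

lemma dt_psi_eigen:
  assumes "decaying psi" "lax_pair n N alpha eta u phi lam psi"
  shows "px (px (dt_psi f1 psi)) x t + (lam + dt_u u f1 x t) * dt_psi f1 psi x t = 0"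
proof -
  interpret riccati_pair "slice u t" "slice (dt_u u f1) t" "sigma t" xi
    by (rule riccati_pair_slice)
  have "dx (dx (slice (dt_psi f1 psi) t))
      = (\<lambda>x. - (lam + slice (dt_u u f1) t x) * slice (dt_psi f1 psi) t x)"
    unfolding slice_dt_psi
    using darboux_eigenfunction decaying1_D(5)[OF decaying_slice[OF assms(1)]]
      slice_eigen assms(2) unfolding lax_pair_def by blast
  then show ?thesis using eigen_slice_iff by metis
qed

lemma dt_phi_eigen:
  assumes j: "j \<in> {1..N}"
  shows "px (px (dt_phi lams xi f1 phi j)) x t
    + (lams j + dt_u u f1 x t) * dt_phi lams xi f1 phi j x t = 0"
proof -
  interpret darboux_data "slice u t" "slice (dt_u u f1) t" "sigma t" xi "slice f1 t" lams N
      "\<lambda>j. slice (phi j) t" "\<lambda>j. slice (dt_phi lams xi f1 phi j) t"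
    by (rule darboux_data_slice)
  have "dx (dx (slice (dt_phi lams xi f1 phi j) t))
      = (\<lambda>x. 1 / csqrt (lams j - xi) * dx (dx (dt1 (sigma t) (slice (phi j) t))) x)"
    unfolding phb_eq[OF j] using smooth1_dt1[OF smooth1_ph[OF j]]
    by (simp only: dx_cmult diffable_cmult smooth1_diffable smooth1_dx)
  also have "\<dots> = (\<lambda>x. - (lams j + slice (dt_u u f1) t x) * slice (dt_phi lams xi f1 phi j) t x)"
    unfolding darboux_eigenfunction[OF smooth1_ph[OF j] ph_eigen[OF j]] phb_eq[OF j]
    by (simp add: fun_eq_iff field_simps)
  finally show ?thesis using eigen_slice_iff by metis
qed

lemma dt_psi_time:
  assumes psi: "decaying psi" "decaying (dt_psi f1 psi)" "lax_pair n N alpha eta u phi lam psi"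
  shows "pt (dt_psi f1 psi) x t
    = Qop n N alpha eta (dt_u u f1) (dt_phi lams xi f1 phi) lam (dt_psi f1 psi) x t"
proof -
  interpret darboux_eigen "slice u t" "slice (dt_u u f1) t" "sigma t" xi "slice f1 t" lams N
      "\<lambda>j. slice (phi j) t" "\<lambda>j. slice (dt_phi lams xi f1 phi j) t" n alpha eta "slice psi t" lam
  proof (rule darboux_eigen.intro[OF darboux_data_slice], unfold_locales)
    show "decaying1 (slice psi t)" "decaying1 (dt1 (sigma t) (slice psi t))"
      using decaying_slice[OF psi(1)] decaying_slice[OF psi(2)] unfolding slice_dt_psi .
    show "dx (dx (slice psi t)) = (\<lambda>x. - (lam + slice u t x) * slice psi t x)"
      using slice_eigen psi(3) unfolding lax_pair_def by blast
  qed
  define Q Qf where "Q = Qop1 n N alpha eta (slice u t) (\<lambda>j. slice (phi j) t)"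
    and "Qf = Q xi (slice f1 t)"
  have "pt (dt_psi f1 psi) x t = pt (px psi) x t - (px f1 x t / f1 x t * pt psi x t
      + (pt (px f1) x t * f1 x t - px f1 x t * pt f1 x t) / (f1 x t)\<^sup>2 * psi x t)"
    using pt_dt_psi dec_f1 psi(1) f1_nz unfolding decaying_def by blast
  also have "\<dots> = dx (Q lam (slice psi t)) x - (dx (slice f1 t) x / slice f1 t x * Q lam (slice psi t) x
      + (dx Qf x * slice f1 t x - dx (slice f1 t) x * Qf x) / (slice f1 t x)\<^sup>2 * slice psi t x)"
    unfolding pt_px_slice_lax[OF psi(1,3)] pt_px_slice_lax[OF dec_f1 f1_lax]
      pt_slice_lax[OF psi(3)] pt_slice_lax[OF f1_lax] px_slice Q_def Qf_def
    by (simp add: slice_def)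
  also have "\<dots> = dx (Q lam (slice psi t)) x - dx rho x * slice psi t x
      - sigma t x * Q lam (slice psi t) x"
  proof -
    have "(dx Qf x * slice f1 t x - dx (slice f1 t) x * Qf x) / (slice f1 t x)\<^sup>2 = dx rho x"
      using fun_cong[OF dx_Qop1_f_over_f, of x] unfolding Qf_def Q_def by (simp add: mult.commute)
    then show ?thesis unfolding sigma_def by (simp add: algebra_simps)
  qed
  also have "\<dots> = Qop1 n N alpha eta (slice (dt_u u f1) t) (\<lambda>j. slice (dt_phi lams xi f1 phi j) t) lam
      (dt1 (sigma t) (slice psi t)) x"
    using fun_cong[OF Qop1_darboux, of x] unfolding Q_def .
  also have "\<dots> = Qop n N alpha eta (dt_u u f1) (dt_phi lams xi f1 phi) lam (dt_psi f1 psi) x t"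
    unfolding Qop_slice[OF decaying_slice[OF dec_ubar]] slice_dt_psi ..
  finally show ?thesis .
qed

lemma dt_u_time:
  "pt (dt_u u f1) x t = px (\<lambda>y s. - 2 * bseq (dt_u u f1) (n + 2) y s
      - 2 * alpha * (\<Sum>j\<in>{1..N}. (dt_phi lams xi f1 phi j y s)\<^sup>2)) x t"
proof -
  interpret darboux_data "slice u t" "slice (dt_u u f1) t" "sigma t" xi "slice f1 t" lams N
      "\<lambda>j. slice (phi j) t" "\<lambda>j. slice (dt_phi lams xi f1 phi j) t" n alpha eta
    by (rule darboux_data_slice)
  have Qf: "Qop1 n N alpha eta (slice u t) (\<lambda>j. slice (phi j) t) xi (slice f1 t)
      = (\<lambda>y. rho y * slice f1 t y)"
    by (rule Qop1_f)
  have f1_slice: "px (px f1) x t = dx (dx (slice f1 t)) x" "px f1 x t = dx (slice f1 t) x"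
    "f1 x t = slice f1 t x"
    unfolding px_slice slice_px by (simp_all add: slice_def)
  have F_nz: "slice f1 t x \<noteq> 0" using f1_nz by (simp add: slice_def)
  have smooth: "smooth u" "smooth f1" using dec_u dec_f1 unfolding decaying_def by blast+
  have "pt (dt_u u f1) x t = pt u x t + 2 * dx (dx rho) x"
    unfolding pt_dt_u[OF smooth f1_nz[rule_format]]
    unfolding pt_slice_lax[OF f1_lax] pt_px_slice_lax[OF dec_f1 f1_lax]
      pt_px_px_slice_lax[OF dec_f1 f1_lax] Qf
    unfolding f1_slice dx_log_derivative_mult[OF smooth1_rho smooth1_f F_nz] ..
  also have "pt u x t = px (\<lambda>y s. - 2 * bseq u (n + 2) y s
      - 2 * alpha * (\<Sum>j\<in>{1..N}. (phi j y s)\<^sup>2)) x t"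
    using sol unfolding kdv_scs_def by blast
  also have "\<dots> = dx (\<lambda>y. - 2 * bseq1 (slice u t) (n + 2) y
      - 2 * alpha * (\<Sum>j\<in>{1..N}. (slice (phi j) t y)\<^sup>2)) x" (is "_ = dx ?G x")
    by (rule px_kdv_flux_slice)
  also have "dx ?G x + 2 * dx (dx rho) x = dx (\<lambda>y. ?G y + 2 * dx rho y) x"
  proof -
    have "smooth1 ?G"
      unfolding power2_eq_square
      using smooth1_bseq1[OF decaying_v] smooth1_ph
      by (intro smooth1_diff smooth1_cmult smooth1_sum smooth1_mult) (auto simp del: bseq1.simps)
    then show ?thesis using smooth1_rho by (simp only: dx_rules)
  qed
  also have "\<dots> = px (\<lambda>y s. - 2 * bseq (dt_u u f1) (n + 2) y s
      - 2 * alpha * (\<Sum>j\<in>{1..N}. (dt_phi lams xi f1 phi j y s)\<^sup>2)) x t"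
    unfolding px_kdv_flux_slice kdv_darboux ..
  finally show ?thesis .
qed

end

theorem proposition4p1:
  fixes n N :: nat and alpha eta xi :: complex and lams :: "nat \<Rightarrow> complex"
    and u f1 :: fn and phi :: "nat \<Rightarrow> fn"
  assumes distinct: "inj_on lams {1..N}"
    and sol: "kdv_scs n N alpha lams u phi"
    and f1_lax: "lax_pair n N alpha eta u phi xi f1"
    and f1_nz: "\<forall>x t. f1 x t \<noteq> 0"
    and xi_ne: "\<forall>j\<in>{1..N}. lams j \<noteq> xi"
    and dec_u: "decaying u" and dec_phi: "\<forall>j\<in>{1..N}. decaying (phi j)"
    and dec_f1: "decaying f1"
    and dec_ubar: "decaying (dt_u u f1)"
    and dec_phibar: "\<forall>j\<in>{1..N}. decaying (dt_phi lams xi f1 phi j)"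
  shows "(\<forall>lam psi. decaying psi \<and> decaying (dt_psi f1 psi)
              \<and> lax_pair n N alpha eta u phi lam psi
            \<longrightarrow> lax_pair n N alpha eta (dt_u u f1) (dt_phi lams xi f1 phi) lam (dt_psi f1 psi))
         \<and> kdv_scs n N alpha lams (dt_u u f1) (dt_phi lams xi f1 phi)"
proof -
  interpret kdv_scs_darboux n N alpha eta xi lams u f1 phi
    by unfold_locales (fact sol f1_lax f1_nz xi_ne dec_u dec_phi dec_f1 dec_ubar dec_phibar)+
  show ?thesis
  proof (intro conjI allI impI)
    fix lam psi
    assume "decaying psi \<and> decaying (dt_psi f1 psi) \<and> lax_pair n N alpha eta u phi lam psi"
    then show "lax_pair n N alpha eta (dt_u u f1) (dt_phi lams xi f1 phi) lam (dt_psi f1 psi)"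
      using dt_psi_eigen dt_psi_time unfolding lax_pair_def[of n N alpha eta "dt_u u f1"] by blast
  next
    show "kdv_scs n N alpha lams (dt_u u f1) (dt_phi lams xi f1 phi)"
      unfolding kdv_scs_def using dt_u_time dt_phi_eigen by blast
  qed
qed

end
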